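(* For every $n\in\mathbb{Z}_{>0}$ there is a bijection \[ \mathrm{E}_n\simeq\bigsqcup_{d\mid n}\mathrm{E}^{\mathrm{p}}_{n/d}\times\Lambda_d . \]
   Context: A square-tiled surface with $n$ squares is a connected surface obtained from $n$ unit squares by identifying, via translations, each top side with some bottom side and each right side with some left side (a connected degree-$n$ cover of $\mathbb{C}/(\mathbb{Z}+i\mathbb{Z})$ branched over one point), counted up to translation isomorphism. $\mathcal{H}(2)$: genus $2$ surfaces with a single cone point, of angle $6\pi$. $\mathrm{E}_n$ is the set of square-tiled surfaces with $n$ squares in $\mathcal{H}(2)$; $\mathrm{E}_n^{\mathrm{p}}$ its subset of primitive surfaces, i.e. those whose lattice of periods (the subgroup of $\mathbb{Z}^2$ generated by holonomy vectors of saddle connections) equals $\mathbb{Z}^2$. $\Lambda_d$ is the set of sublattices of $\mathbb{Z}+i\mathbb{Z}$ of index $d$. *)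

theory Defs
  imports Main "HOL-Combinatorics.Permutations"
begin

text \<open>Combinatorial model of square-tiled surfaces with n squares, labelled 0..n-1.
  A surface is a pair (r,u) of permutations of {..<n}: r i is the square to the right
  of square i, u i the square above square i. Connectedness: the group generated
  by r and u acts transitively.\<close>

definition sts :: "nat \<Rightarrow> ((nat \<Rightarrow> nat) \<times> (nat \<Rightarrow> nat)) set" where
  "sts n = {(r,u). r permutes {..<n} \<and> u permutes {..<n} \<and>
     (\<forall>i<n. \<forall>j<n. (i,j) \<in> ({(k, r k) | k. k < n} \<union> {(k, u k) | k. k < n})\<^sup>*)}"

text \<open>Translation isomorphism = simultaneous relabelling of the squares.\<close>
definition sts_iso :: "nat \<Rightarrow> (((nat \<Rightarrow> nat) \<times> (nat \<Rightarrow> nat)) \<times> ((nat \<Rightarrow> nat) \<times> (nat \<Rightarrow> nat))) set" where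
  "sts_iso n = {((r,u),(r',u')). (r,u) \<in> sts n \<and> (r',u') \<in> sts n \<and>
     (\<exists>\<sigma>. \<sigma> permutes {..<n} \<and> r' = \<sigma> \<circ> r \<circ> inv \<sigma> \<and> u' = \<sigma> \<circ> u \<circ> inv \<sigma>)}"

text \<open>Commutator: the squares having the bottom-left corner of square i as their
  bottom-left corner form the cycle of i under this permutation; a vertex of cone angle
  2 pi k corresponds to a cycle of length k.\<close>
definition comm :: "(nat \<Rightarrow> nat) \<Rightarrow> (nat \<Rightarrow> nat) \<Rightarrow> nat \<Rightarrow> nat" where
  "comm r u = u \<circ> r \<circ> inv u \<circ> inv r"

text \<open>In H(2): exactly one non-regular vertex, of cone angle 6 pi, i.e. the commutator is
  a 3-cycle (exactly 3 moved points) and fixes all other squares. Then by Euler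
  characteristic the genus is 2.\<close>
definition inH2 :: "nat \<Rightarrow> (nat \<Rightarrow> nat) \<times> (nat \<Rightarrow> nat) \<Rightarrow> bool" where
  "inH2 n p = (case p of (r,u) \<Rightarrow> card {i. i < n \<and> comm r u i \<noteq> i} = 3)"

text \<open>edge_path r u i j a b: there is a path along edges of the squares from the
  bottom-left corner of square i to the bottom-left corner of square j with holonomy
  (a,b).\<close>
inductive edge_path :: "(nat \<Rightarrow> nat) \<Rightarrow> (nat \<Rightarrow> nat) \<Rightarrow> nat \<Rightarrow> nat \<Rightarrow> int \<Rightarrow> int \<Rightarrow> bool"
  for r u where
  ep_refl: "edge_path r u i i 0 0"
| ep_rot: "edge_path r u i j a b \<Longrightarrow> edge_path r u i (comm r u j) a b"
| ep_right: "edge_path r u i j a b \<Longrightarrow> edge_path r u i (r j) (a + 1) b"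
| ep_left: "edge_path r u i j a b \<Longrightarrow> edge_path r u i (inv r j) (a - 1) b"
| ep_up: "edge_path r u i j a b \<Longrightarrow> edge_path r u i (u j) a (b + 1)"
| ep_down: "edge_path r u i j a b \<Longrightarrow> edge_path r u i (inv u j) a (b - 1)"

text \<open>Lattice of periods: holonomies of paths from cone point to cone point
  (= subgroup generated by the holonomies of saddle connections).\<close>
definition periods :: "nat \<Rightarrow> (nat \<Rightarrow> nat) \<times> (nat \<Rightarrow> nat) \<Rightarrow> (int \<times> int) set" where
  "periods n p = (case p of (r,u) \<Rightarrow>
     {(a,b). \<exists>i<n. \<exists>j<n. comm r u i \<noteq> i \<and> comm r u j \<noteq> j \<and> edge_path r u i j a b})"

definition primitive :: "nat \<Rightarrow> (nat \<Rightarrow> nat) \<times> (nat \<Rightarrow> nat) \<Rightarrow> bool" where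
  "primitive n p = (periods n p = UNIV)"

definition E :: "nat \<Rightarrow> ((nat \<Rightarrow> nat) \<times> (nat \<Rightarrow> nat)) set set" where
  "E n = {p \<in> sts n. inH2 n p} // sts_iso n"

definition Ep :: "nat \<Rightarrow> ((nat \<Rightarrow> nat) \<times> (nat \<Rightarrow> nat)) set set" where
  "Ep n = {p \<in> sts n. inH2 n p \<and> primitive n p} // sts_iso n"

definition sublattice :: "(int \<times> int) set \<Rightarrow> bool" where
  "sublattice L = ((0,0) \<in> L \<and> (\<forall>x\<in>L. \<forall>y\<in>L. (fst x + fst y, snd x + snd y) \<in> L)
      \<and> (\<forall>x\<in>L. (- fst x, - snd x) \<in> L))"

definition coset :: "int \<times> int \<Rightarrow> (int \<times> int) set \<Rightarrow> (int \<times> int) set" where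
  "coset x L = {(fst x + fst y, snd x + snd y) | y. y \<in> L}"

definition Lambda :: "nat \<Rightarrow> (int \<times> int) set set" where
  "Lambda d = {L. sublattice L \<and> card (range (\<lambda>x. coset x L)) = d}"

end

theory Submission
  imports Defs "HOL-Combinatorics.Cycles"
begin

text \<open>A surface in \<open>H(2)\<close> has a single cone point, so its lattice of periods is the group of
  holonomies of closed walks at that point; it has some finite index \<open>d\<close>. Three operations act
  bijectively on isomorphism classes and transform the period lattice in a controlled way:
  exchanging the horizontal and vertical directions transposes it, shearing (replacing the upward
  gluing \<open>u\<close> by \<open>u \<circ> r\<^sup>k\<close>) shears it, and the \<open>e\<close>-fold horizontal stretch scales its first
  coordinate by \<open>e\<close>. Every surface whose horizontal periods are divisible by \<open>e\<close> is such a
  stretch: the horizontal holonomy from the cone point, taken mod \<open>e\<close>, splits the squares into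
  \<open>e\<close> levels, and level \<open>0\<close> carries the surface that was stretched. Writing a lattice of index
  \<open>d = a c\<close> in Hermite normal form, these moves turn it into \<open>\<int>\<^sup>2\<close> and \<open>n\<close> into \<open>n / d\<close>.
  Hence each lattice in \<open>Lambda d\<close> is the period lattice of exactly \<open>card (Ep (n div d))\<close>
  classes, so both sides of the claimed bijection have the same finite cardinality.\<close>

section \<open>Permutations of an initial segment\<close>

lemmas bij_inv_f_f = inv_f_f[OF bij_is_inj]
lemmas bij_f_inv_f = surj_f_inv_f[OF bij_is_surj]

lemma bij_funpow_inv_cancel:
  assumes "bij f"
  shows "(inv f ^^ k) ((f ^^ k) x) = x" "(f ^^ k) ((inv f ^^ k) x) = x"
  using fun_cong[OF inv_fn_o_fn_is_id[OF assms]] fun_cong[OF fn_o_inv_fn_is_id[OF assms]]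
    by simp_all

lemma funpow_commute:
  assumes "\<And>x. s (f x) = g (s x)"
  shows "s ((f ^^ k) x) = (g ^^ k) (s x)"
  by (induction k) (auto simp: assms)

lemma permutes_lessThan_if_inj_on:
  assumes "inj_on f {..<N}" "\<And>k. k < N \<Longrightarrow> f k < N" "\<And>k. \<not> k < N \<Longrightarrow> f k = k"
  shows "f permutes {..<(N::nat)}"
proof (rule bij_imp_permutes)
  have "f ` {..<N} = {..<N}" using endo_inj_surj[of "{..<N}" f] assms(1,2) by auto
  then show "bij_betw f {..<N} {..<N}" using assms(1) by (simp add: bij_betw_def)
  show "\<And>x. x \<notin> {..<N} \<Longrightarrow> f x = x" using assms(3) by simp
qed

lemma permutes_lessThan_less: "p permutes {..<n} \<Longrightarrow> x < n \<Longrightarrow> p x < (n::nat)"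
  by (metis lessThan_iff permutes_in_image)

lemma permutes_lessThan_inv_less: "p permutes {..<n} \<Longrightarrow> x < n \<Longrightarrow> inv p x < (n::nat)"
  by (metis lessThan_iff permutes_in_image permutes_inv)

lemma permutes_lessThan_funpow_less: "p permutes {..<n} \<Longrightarrow> x < n \<Longrightarrow> (p ^^ k) x < (n::nat)"
  by (metis lessThan_iff permutes_in_image permutes_funpow)

lemma permutes_inv_as_funpow:
  assumes "p permutes S" "finite S"
  obtains N where "\<And>x. inv p x = (p ^^ N) x"
proof -
  obtain M where M: "p ^^ M = id" "M > 0"
    using permutation_is_nilpotent permutation_permutes assms by blast
  have "p ((p ^^ (M - 1)) x) = x" for x
    using M funpow_Suc_right[of "M - 1" p] by (metis Suc_diff_1 comp_apply funpow.simps(2) id_apply)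
  then show ?thesis using that permutes_inv_eq[OF assms(1)] by blast
qed

lemma three_moved_points_same_orbit:
  fixes c :: "nat \<Rightarrow> nat"
  assumes c: "c permutes {..<n}" and three: "card {i. i < n \<and> c i \<noteq> i} = 3"
    and i: "i < n" "c i \<noteq> i" and j: "j < n" "c j \<noteq> j"
  shows "\<exists>k. j = (c ^^ k) i"
proof -
  let ?M = "{i. i < n \<and> c i \<noteq> i}"
  have inj: "inj c" using c permutes_inj by blast
  have cM: "c x \<in> ?M" if "x \<in> ?M" for x
    using that inj permutes_lessThan_less[OF c] by (auto dest: injD)
  consider "j = (c ^^ 0) i" | "j = (c ^^ 1) i" | "j \<noteq> i" "j \<noteq> c i" by fastforce
  then show ?thesis
  proof cases
    case 3
    have ciM: "c i \<in> ?M" using cM i by auto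
    have "{i, c i, j} = ?M"
      using 3 i j ciM three by (intro card_subset_eq) auto
    then have "c (c i) = i \<or> c (c i) = j" using cM[OF ciM] ciM by auto
    moreover have "c (c i) \<noteq> i"
    proof
      assume cci: "c (c i) = i"
      have "c j \<in> {i, c i}" using cM j \<open>{i, c i, j} = ?M\<close> by blast
      moreover have "c j \<noteq> c (c i)" "c j \<noteq> c i" using 3 inj by (simp_all add: inj_eq)
      ultimately show False using cci by auto
    qed
    ultimately have "j = (c ^^ 2) i" by (simp add: numeral_2_eq_2)
    then show ?thesis ..
  qed blast+
qed

section \<open>Walks and the lattice of periods\<close>

inductive walk :: "(nat \<Rightarrow> nat) \<Rightarrow> (nat \<Rightarrow> nat) \<Rightarrow> nat \<Rightarrow> nat \<Rightarrow> int \<Rightarrow> int \<Rightarrow> bool"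
  for r u where
  walk_refl: "walk r u i i 0 0"
| walk_right: "walk r u i j a b \<Longrightarrow> walk r u i (r j) (a + 1) b"
| walk_left: "walk r u i j a b \<Longrightarrow> walk r u i (inv r j) (a - 1) b"
| walk_up: "walk r u i j a b \<Longrightarrow> walk r u i (u j) a (b + 1)"
| walk_down: "walk r u i j a b \<Longrightarrow> walk r u i (inv u j) a (b - 1)"

lemma walk_cong: "walk r u i j a b \<Longrightarrow> j = j' \<Longrightarrow> a = a' \<Longrightarrow> b = b' \<Longrightarrow> walk r u i j' a' b'"
  by simp

lemma walk_trans:
  assumes "walk r u j k a' b'" "walk r u i j a b"
  shows "walk r u i k (a + a') (b + b')"
  using assms
proof (induction rule: walk.induct)
  case (walk_right k a' b')
  from walk.walk_right[OF walk_right.IH[OF walk_right.prems]] show ?case by (simp add: algebra_simps)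
next
  case (walk_left k a' b')
  from walk.walk_left[OF walk_left.IH[OF walk_left.prems]] show ?case by (simp add: algebra_simps)
next
  case (walk_up k a' b')
  from walk.walk_up[OF walk_up.IH[OF walk_up.prems]] show ?case by (simp add: algebra_simps)
next
  case (walk_down k a' b')
  from walk.walk_down[OF walk_down.IH[OF walk_down.prems]] show ?case by (simp add: algebra_simps)
qed simp

lemma walk_reverse:
  assumes "bij r" "bij u" "walk r u i j a b"
  shows "walk r u j i (-a) (-b)"
  using assms(3)
proof (induction rule: walk.induct)
  case walk_refl then show ?case by (simp add: walk.walk_refl)
next
  case (walk_right i j a b)
  have "walk r u (r j) j (-1) 0" using walk_left[OF walk_refl, of r u "r j"] assms
    by (simp add: bij_inv_f_f)
  from walk_trans[OF walk_right.IH this] show ?case by (simp add: algebra_simps)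
next
  case (walk_left i j a b)
  have "walk r u (inv r j) j 1 0" using walk_right[OF walk_refl, of r u "inv r j"] assms
    by (simp add: bij_f_inv_f)
  from walk_trans[OF walk_left.IH this] show ?case by (simp add: algebra_simps)
next
  case (walk_up i j a b)
  have "walk r u (u j) j 0 (-1)" using walk_down[OF walk_refl, of r u "u j"] assms
    by (simp add: bij_inv_f_f)
  from walk_trans[OF walk_up.IH this] show ?case by (simp add: algebra_simps)
next
  case (walk_down i j a b)
  have "walk r u (inv u j) j 0 1" using walk_up[OF walk_refl, of r u "inv u j"] assms
    by (simp add: bij_f_inv_f)
  from walk_trans[OF walk_down.IH this] show ?case by (simp add: algebra_simps)
qed

lemma walk_funpow_right: "walk r u j ((r ^^ k) j) (int k) 0"
  by (induction k) (auto intro: walk_refl dest: walk_right simp: algebra_simps)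

lemma walk_funpow_left: "walk r u j ((inv r ^^ k) j) (- int k) 0"
proof (induction k)
  case (Suc k) from walk_left[OF this] show ?case by (rule walk_cong) simp_all
qed (simp add: walk_refl)

lemma walk_funpow_up: "walk r u j ((u ^^ k) j) 0 (int k)"
  by (induction k) (auto intro: walk_refl dest: walk_up simp: algebra_simps)

lemma comm_apply: "comm r u j = u (r (inv u (inv r j)))"
  by (simp add: comm_def)

lemma comm_right_up: "bij r \<Longrightarrow> bij u \<Longrightarrow> comm r u (r (u z)) = u (r z)"
  by (simp add: comm_apply bij_inv_f_f)

lemma walk_comm: "walk r u j (comm r u j) 0 0"
  using walk_up[OF walk_right[OF walk_down[OF walk_left[OF walk_refl]]], of r u j]
  by (simp add: comm_apply)

lemma walk_funpow_comm: "walk r u i ((comm r u ^^ k) i) 0 0"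
  by (induction k) (auto intro: walk_refl dest: walk_trans[OF walk_comm])

text \<open>For bijective gluings, turning around a vertex (the constructor for \<^const>\<open>comm\<close>
  in \<^const>\<open>edge_path\<close>) is a composite of edge steps with zero holonomy.\<close>
lemma edge_path_iff_walk:
  assumes "bij r" "bij u"
  shows "edge_path r u i j a b \<longleftrightarrow> walk r u i j a b"
proof
  assume "edge_path r u i j a b" then show "walk r u i j a b"
    by (induction rule: edge_path.induct) (auto intro: walk.intros dest: walk_trans[OF walk_comm])
next
  assume "walk r u i j a b" then show "edge_path r u i j a b"
    by (induction rule: walk.induct) (auto intro: edge_path.intros)
qed

definition square_adj :: "nat \<Rightarrow> (nat \<Rightarrow> nat) \<Rightarrow> (nat \<Rightarrow> nat) \<Rightarrow> nat rel" where
  "square_adj n r u = {(k, r k) | k. k < n} \<union> {(k, u k) | k. k < n}"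

lemma sts_iff: "(r,u) \<in> sts n \<longleftrightarrow> r permutes {..<n} \<and> u permutes {..<n} \<and>
     (\<forall>i<n. \<forall>j<n. (i,j) \<in> (square_adj n r u)\<^sup>*)"
  by (simp add: sts_def square_adj_def)

lemma sts_permutes: "(r,u) \<in> sts n \<Longrightarrow> r permutes {..<n}" "(r,u) \<in> sts n \<Longrightarrow> u permutes {..<n}"
  by (auto simp: sts_iff)

lemma sts_bij: "(r,u) \<in> sts n \<Longrightarrow> bij r" "(r,u) \<in> sts n \<Longrightarrow> bij u"
  by (auto simp: sts_iff permutes_bij)

lemma sts_finite: "finite (sts n)"
proof (rule finite_subset)
  show "sts n \<subseteq> {f. f permutes {..<n}} \<times> {f. f permutes {..<n}}" by (auto simp: sts_def)
qed (simp add: finite_permutations)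

lemma square_adj_right: "k < n \<Longrightarrow> (k, r k) \<in> (square_adj n r u)\<^sup>*"
  and square_adj_up: "k < n \<Longrightarrow> (k, u k) \<in> (square_adj n r u)\<^sup>*"
  unfolding square_adj_def by blast+

lemma square_adj_swap: "square_adj n u r = square_adj n r u"
  unfolding square_adj_def by auto

lemma rtrancl_square_adj_mono:
  assumes "\<And>k. k < n \<Longrightarrow> (k, r k) \<in> R\<^sup>*" "\<And>k. k < n \<Longrightarrow> (k, u k) \<in> R\<^sup>*"
    and "(i,j) \<in> (square_adj n r u)\<^sup>*"
  shows "(i,j) \<in> R\<^sup>*"
  using assms(3)
proof (induction rule: rtrancl_induct)
  case (step y z)
  then have "(y,z) \<in> R\<^sup>*" using assms(1,2) unfolding square_adj_def by blast
  with step.IH show ?case by simp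
qed simp

lemma square_adj_funpow_right:
  assumes "r permutes {..<n}" "k < n"
  shows "(k, (r ^^ j) k) \<in> (square_adj n r u)\<^sup>*"
proof (induction j)
  case (Suc j)
  have "((r ^^ j) k, r ((r ^^ j) k)) \<in> (square_adj n r u)\<^sup>*"
    using permutes_lessThan_funpow_less[OF assms] by (rule square_adj_right)
  with Suc show ?case by simp
qed simp

lemma square_adj_funpow_left:
  assumes "r permutes {..<n}" "k < n"
  shows "(k, (inv r ^^ j) k) \<in> (square_adj n r u)\<^sup>*"
proof -
  obtain N where N: "\<And>x. inv r x = (r ^^ N) x" using permutes_inv_as_funpow[OF assms(1)] by blast
  have "inv r = r ^^ N" using N by auto
  then have "inv r ^^ j = r ^^ (N * j)" by (simp add: funpow_mult)
  then show ?thesis using square_adj_funpow_right[OF assms] by simp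
qed

lemma rtrancl_square_adj_walk:
  "(i,j) \<in> (square_adj n r u)\<^sup>* \<Longrightarrow> \<exists>a b. walk r u i j a b"
proof (induction rule: rtrancl_induct)
  case base then show ?case by (auto intro: walk_refl)
next
  case (step y z)
  then show ?case unfolding square_adj_def by (auto intro: walk_right walk_up)
qed

lemma sts_walk: "(r,u) \<in> sts n \<Longrightarrow> i < n \<Longrightarrow> j < n \<Longrightarrow> \<exists>a b. walk r u i j a b"
  using rtrancl_square_adj_walk sts_iff by blast

lemma comm_permutes: "r permutes S \<Longrightarrow> u permutes S \<Longrightarrow> comm r u permutes S"
  unfolding comm_def by (intro permutes_compose permutes_inv) auto

lemma inH2_iff: "inH2 n (r,u) \<longleftrightarrow> card {i. i < n \<and> comm r u i \<noteq> i} = 3"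
  by (simp add: inH2_def)

lemma cone_point_exists:
  assumes "inH2 n (r,u)"
  obtains c0 where "c0 < n" "comm r u c0 \<noteq> c0"
proof -
  have "{i. i < n \<and> comm r u i \<noteq> i} \<noteq> {}" using assms unfolding inH2_iff
    by (metis card.empty zero_neq_numeral)
  then show ?thesis using that by blast
qed

lemma walk_cone_points:
  assumes "(r,u) \<in> sts n" "inH2 n (r,u)" "i < n" "comm r u i \<noteq> i" "j < n" "comm r u j \<noteq> j"
  shows "walk r u i j 0 0"
proof -
  obtain k where "j = (comm r u ^^ k) i"
    using three_moved_points_same_orbit[OF comm_permutes[OF sts_permutes[OF assms(1)]]] assms
    unfolding inH2_iff by blast
  then show ?thesis using walk_funpow_comm by simp
qed

lemma periods_eq_loops:
  assumes "(r,u) \<in> sts n" "inH2 n (r,u)" "c0 < n" "comm r u c0 \<noteq> c0"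
  shows "periods n (r,u) = {(a,b). walk r u c0 c0 a b}"
proof -
  have b: "bij r" "bij u" using sts_bij[OF assms(1)] by auto
  show ?thesis
  proof (rule set_eqI, clarify, rule iffI)
    fix a b assume "(a,b) \<in> periods n (r,u)"
    then obtain i j where ij: "i < n" "j < n" "comm r u i \<noteq> i" "comm r u j \<noteq> j" "walk r u i j a b"
      unfolding periods_def using edge_path_iff_walk[OF b] by auto
    have "walk r u c0 i 0 0" "walk r u j c0 0 0" using walk_cone_points assms ij by blast+
    from walk_trans[OF this(2) walk_trans[OF ij(5) this(1)]]
    show "(a,b) \<in> {(a,b). walk r u c0 c0 a b}" by simp
  next
    fix a b assume "(a,b) \<in> {(a,b). walk r u c0 c0 a b}"
    then show "(a,b) \<in> periods n (r,u)"
      unfolding periods_def using edge_path_iff_walk[OF b] assms by auto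
  qed
qed

section \<open>Isomorphism classes with prescribed periods\<close>

definition conjugates ::
    "(nat \<Rightarrow> nat) \<Rightarrow> nat \<Rightarrow> (nat \<Rightarrow> nat) \<times> (nat \<Rightarrow> nat) \<Rightarrow> (nat \<Rightarrow> nat) \<times> (nat \<Rightarrow> nat) \<Rightarrow> bool" where
  "conjugates s n p q \<longleftrightarrow> s permutes {..<n} \<and>
     (\<forall>x. s (fst p x) = fst q (s x)) \<and> (\<forall>x. s (snd p x) = snd q (s x))"

lemma sts_iso_iff:
  "(p,q) \<in> sts_iso n \<longleftrightarrow> p \<in> sts n \<and> q \<in> sts n \<and> (\<exists>s. conjugates s n p q)"
proof -
  obtain r u r' u' where pq: "p = (r,u)" "q = (r',u')" by (cases p, cases q) auto
  have conj_iff: "f' = s \<circ> f \<circ> inv s \<longleftrightarrow> (\<forall>x. s (f x) = f' (s x))"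
    if "s permutes {..<n}" for s f f' :: "nat \<Rightarrow> nat"
    using that by (auto simp: fun_eq_iff permutes_inverses)
  have "(\<exists>s. s permutes {..<n} \<and> r' = s \<circ> r \<circ> inv s \<and> u' = s \<circ> u \<circ> inv s)
     \<longleftrightarrow> (\<exists>s. conjugates s n p q)"
    unfolding conjugates_def pq fst_conv snd_conv by (meson conj_iff)
  then show ?thesis unfolding sts_iso_def pq by auto
qed

lemma conjugates_inv_commute:
  assumes "bij f" "bij g" "\<And>x. s (f x) = g (s x)"
  shows "s (inv f x) = inv g (s x)"
  by (metis assms bij_f_inv_f bij_inv_f_f)

lemma conjugates_inv:
  assumes "conjugates s n p q"
  shows "conjugates (inv s) n q p"
proof -
  have sp: "s permutes {..<n}" using assms conjugates_def by auto
  show ?thesis unfolding conjugates_def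
  proof (intro conjI allI)
    show "inv s permutes {..<n}" using sp permutes_inv by blast
    fix x
    have "s (fst p (inv s x)) = fst q x" "s (snd p (inv s x)) = snd q x"
      using assms unfolding conjugates_def by (metis permutes_inverses(1) sp)+
    then show "inv s (fst q x) = fst p (inv s x)" "inv s (snd q x) = snd p (inv s x)"
      by (metis permutes_inverses(2) sp)+
  qed
qed

lemma conjugates_comp: "conjugates s n p q \<Longrightarrow> conjugates t n q w \<Longrightarrow> conjugates (t \<circ> s) n p w"
  unfolding conjugates_def by (auto intro: permutes_compose)

lemma conjugates_id: "conjugates id n p p"
  unfolding conjugates_def by simp

lemma equiv_sts_iso: "equiv (sts n) (sts_iso n)"
proof (rule equivI)
  show "refl_on (sts n) (sts_iso n)"
    unfolding refl_on_def using conjugates_id by (auto simp: sts_iso_iff)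
  show "sym (sts_iso n)"
    unfolding sym_def sts_iso_iff using conjugates_inv by blast
  show "trans (sts_iso n)"
    unfolding trans_def sts_iso_iff using conjugates_comp by blast
  show "sts_iso n \<subseteq> sts n \<times> sts n" by (auto simp: sts_iso_def)
qed

lemma sts_iso_refl: "p \<in> sts n \<Longrightarrow> (p, p) \<in> sts_iso n"
  using equiv_sts_iso by (simp add: equiv_def refl_on_def)

lemma conjugates_commute:
  assumes "conjugates s n (r1,u1) (r2,u2)" "bij r1" "bij u1" "bij r2" "bij u2"
  shows "s (r1 x) = r2 (s x)" "s (u1 x) = u2 (s x)"
    and "s (inv r1 x) = inv r2 (s x)" "s (inv u1 x) = inv u2 (s x)"
  using assms conjugates_inv_commute[of r1 r2 s] conjugates_inv_commute[of u1 u2 s]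
  unfolding conjugates_def by auto

lemma walk_conjugates:
  assumes "conjugates s n (r1,u1) (r2,u2)" "bij r1" "bij u1" "bij r2" "bij u2"
    and "walk r1 u1 i j a b"
  shows "walk r2 u2 (s i) (s j) a b"
  using assms(6)
  by (induction rule: walk.induct) (auto simp: conjugates_commute[OF assms(1-5)] intro: walk.intros)

lemma comm_conjugates:
  assumes "conjugates s n (r1,u1) (r2,u2)" "bij r1" "bij u1" "bij r2" "bij u2"
  shows "s (comm r1 u1 x) = comm r2 u2 (s x)"
  by (simp add: comm_apply conjugates_commute[OF assms])

lemma square_adj_conjugates:
  assumes "conjugates s n (r1,u1) (r2,u2)" "(i,j) \<in> (square_adj n r1 u1)\<^sup>*"
  shows "(s i, s j) \<in> (square_adj n r2 u2)\<^sup>*"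
  using assms(2)
proof (induction rule: rtrancl_induct)
  case (step y z)
  have sp: "s permutes {..<n}" and "\<And>x. s (r1 x) = r2 (s x)" "\<And>x. s (u1 x) = u2 (s x)"
    using assms(1) unfolding conjugates_def by auto
  with step(2) have "(s y, s z) \<in> square_adj n r2 u2"
    unfolding square_adj_def by (auto intro: permutes_lessThan_less)
  with step.IH show ?case by simp
qed simp

lemma sts_conjugates:
  assumes "conjugates s n (r1,u1) (r2,u2)" "(r1,u1) \<in> sts n" "r2 permutes {..<n}" "u2 permutes {..<n}"
  shows "(r2,u2) \<in> sts n"
proof -
  have sp: "s permutes {..<n}" using assms(1) conjugates_def by auto
  have "(i,j) \<in> (square_adj n r2 u2)\<^sup>*" if "i < n" "j < n" for i j
  proof -
    have "(inv s i, inv s j) \<in> (square_adj n r1 u1)\<^sup>*"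
      using assms(2) that permutes_lessThan_inv_less[OF sp] sts_iff by blast
    from square_adj_conjugates[OF assms(1) this] show ?thesis using sp permutes_inverses(1) by metis
  qed
  then show ?thesis using assms(3,4) sts_iff by blast
qed

lemma periods_conjugates_subset:
  assumes "conjugates s n p q" "p \<in> sts n" "q \<in> sts n"
  shows "periods n p \<subseteq> periods n q"
proof -
  obtain r1 u1 r2 u2 where pq: "p = (r1,u1)" "q = (r2,u2)" by (cases p, cases q) auto
  have b: "bij r1" "bij u1" "bij r2" "bij u2" using assms sts_bij pq by auto
  have sp: "s permutes {..<n}" using assms conjugates_def by auto
  have inj: "inj s" using sp permutes_inj by blast
  show ?thesis
  proof
    fix x assume "x \<in> periods n p"
    then obtain a b i j where x: "x = (a,b)" "i < n" "j < n" "comm r1 u1 i \<noteq> i" "comm r1 u1 j \<noteq> j"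
      "walk r1 u1 i j a b"
      unfolding periods_def pq using edge_path_iff_walk[OF b(1,2)] by auto
    have "walk r2 u2 (s i) (s j) a b" using walk_conjugates[OF assms(1)[unfolded pq] b x(6)] .
    moreover have "s i < n" "s j < n" using x permutes_lessThan_less[OF sp] by auto
    moreover have "comm r2 u2 (s i) \<noteq> s i" "comm r2 u2 (s j) \<noteq> s j"
      using comm_conjugates[OF assms(1)[unfolded pq] b] x inj by (metis injD)+
    ultimately show "x \<in> periods n q"
      unfolding periods_def pq x using edge_path_iff_walk[OF b(3,4)] by auto
  qed
qed

lemma sts_iso_periods: "(p,q) \<in> sts_iso n \<Longrightarrow> periods n p = periods n q"
  by (meson conjugates_inv periods_conjugates_subset subset_antisym sts_iso_iff)

lemma sts_iso_inH2:
  assumes "(p,q) \<in> sts_iso n"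
  shows "inH2 n p \<longleftrightarrow> inH2 n q"
proof -
  obtain s r1 u1 r2 u2 where c: "conjugates s n (r1,u1) (r2,u2)" and pq: "p = (r1,u1)" "q = (r2,u2)"
    and s: "p \<in> sts n" "q \<in> sts n"
    using assms sts_iso_iff by (cases p, cases q) auto
  have b: "bij r1" "bij u1" "bij r2" "bij u2" using s sts_bij pq by auto
  have sp: "s permutes {..<n}" using c conjugates_def by auto
  have "{i. i < n \<and> comm r2 u2 i \<noteq> i} = s ` {i. i < n \<and> comm r1 u1 i \<noteq> i}"
  proof (rule set_eqI, rule iffI)
    fix x assume x: "x \<in> {i. i < n \<and> comm r2 u2 i \<noteq> i}"
    have "s (inv s x) = x" using sp permutes_inverses(1) by metis
    moreover have "inv s x < n" using x permutes_lessThan_inv_less[OF sp] by simp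
    ultimately show "x \<in> s ` {i. i < n \<and> comm r1 u1 i \<noteq> i}"
      using comm_conjugates[OF c b, of "inv s x"] x
      by (metis (mono_tags, lifting) image_eqI mem_Collect_eq)
  next
    fix x assume "x \<in> s ` {i. i < n \<and> comm r1 u1 i \<noteq> i}"
    then obtain y where y: "x = s y" "y < n" "comm r1 u1 y \<noteq> y" by blast
    then show "x \<in> {i. i < n \<and> comm r2 u2 i \<noteq> i}"
      using comm_conjugates[OF c b, of y, symmetric] permutes_lessThan_less[OF sp]
      by (simp add: inj_eq[OF permutes_inj[OF sp]])
  qed
  then show ?thesis
    unfolding pq inH2_iff using permutes_inj[OF sp] by (simp add: card_image inj_on_subset)
qed

lemma Image_image_equiv_class:
  assumes eX: "equiv X R" and eY: "equiv Y R'" and "A \<subseteq> X" "p \<in> A"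
    and A_closed: "\<And>p p'. p \<in> A \<Longrightarrow> (p,p') \<in> R \<Longrightarrow> p' \<in> A"
    and preserves: "\<And>p1 p2. p1 \<in> A \<Longrightarrow> p2 \<in> A \<Longrightarrow> (p1,p2) \<in> R \<Longrightarrow> (F p1, F p2) \<in> R'"
  shows "R' `` (F ` (R `` {p})) = R' `` {F p}"
proof
  have "p \<in> R `` {p}" using eX assms(3,4) by (meson equiv_class_self subsetD)
  then show "R' `` {F p} \<subseteq> R' `` (F ` (R `` {p}))" by auto
  show "R' `` (F ` (R `` {p})) \<subseteq> R' `` {F p}"
  proof
    fix y assume "y \<in> R' `` (F ` (R `` {p}))"
    then obtain p' where p': "(p,p') \<in> R" "(F p', y) \<in> R'" by auto
    have "(F p, F p') \<in> R'" using preserves A_closed assms(4) p'(1) by blast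
    then show "y \<in> R' `` {F p}" using p'(2) eY by (meson equivE transD ImageI singletonI)
  qed
qed

lemma bij_betw_quotients:
  assumes eX: "equiv X R" and eY: "equiv Y R'"
    and AX: "A \<subseteq> X" and BY: "B \<subseteq> Y"
    and A_closed: "\<And>p p'. p \<in> A \<Longrightarrow> (p,p') \<in> R \<Longrightarrow> p' \<in> A"
    and FAB: "\<And>p. p \<in> A \<Longrightarrow> F p \<in> B"
    and preserves: "\<And>p1 p2. p1 \<in> A \<Longrightarrow> p2 \<in> A \<Longrightarrow> (p1,p2) \<in> R \<Longrightarrow> (F p1, F p2) \<in> R'"
    and reflects: "\<And>p1 p2. p1 \<in> A \<Longrightarrow> p2 \<in> A \<Longrightarrow> (F p1, F p2) \<in> R' \<Longrightarrow> (p1,p2) \<in> R"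
    and surj: "\<And>q. q \<in> B \<Longrightarrow> \<exists>p\<in>A. (F p, q) \<in> R'"
  shows "bij_betw (\<lambda>C. R' `` (F ` C)) (A // R) (B // R')"
proof (rule bij_betw_imageI)
  have cls: "R' `` (F ` (R `` {p})) = R' `` {F p}" if "p \<in> A" for p
    by (rule Image_image_equiv_class[OF eX eY AX that]) (use A_closed preserves in blast)+
  show "inj_on (\<lambda>C. R' `` (F ` C)) (A // R)"
  proof (rule inj_onI)
    fix C D assume "C \<in> A // R" "D \<in> A // R" and eq: "R' `` (F ` C) = R' `` (F ` D)"
    then obtain p q where p: "p \<in> A" "C = R `` {p}" and q: "q \<in> A" "D = R `` {q}"
      by (auto elim!: quotientE)
    have "R' `` {F p} = R' `` {F q}" using eq cls p q by simp
    then have "(F p, F q) \<in> R'" using eY FAB p q BY by (meson equiv_class_eq_iff subsetD)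
    then show "C = D" using reflects p q eX by (simp add: equiv_class_eq)
  qed
  show "(\<lambda>C. R' `` (F ` C)) ` (A // R) = B // R'"
  proof (rule set_eqI, rule iffI)
    fix E assume "E \<in> (\<lambda>C. R' `` (F ` C)) ` (A // R)"
    then obtain p where p: "p \<in> A" "E = R' `` (F ` (R `` {p}))" by (auto elim: quotientE)
    then show "E \<in> B // R'" using cls FAB by (auto intro: quotientI)
  next
    fix E assume "E \<in> B // R'"
    then obtain q where q: "q \<in> B" "E = R' `` {q}" by (auto elim: quotientE)
    obtain p where p: "p \<in> A" "(F p, q) \<in> R'" using surj q by blast
    have "E = R' `` (F ` (R `` {p}))" using q p eY cls by (simp add: equiv_class_eq)
    then show "E \<in> (\<lambda>C. R' `` (F ` C)) ` (A // R)" using p by (auto intro: quotientI)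
  qed
qed

definition with_periods :: "nat \<Rightarrow> (int \<times> int) set \<Rightarrow> ((nat \<Rightarrow> nat) \<times> (nat \<Rightarrow> nat)) set" where
  "with_periods n L = {p \<in> sts n. inH2 n p \<and> periods n p = L}"

definition period_classes :: "nat \<Rightarrow> (int \<times> int) set \<Rightarrow> ((nat \<Rightarrow> nat) \<times> (nat \<Rightarrow> nat)) set set" where
  "period_classes n L = with_periods n L // sts_iso n"

lemma with_periods_sts_iso: "p \<in> with_periods n L \<Longrightarrow> (p,p') \<in> sts_iso n \<Longrightarrow> p' \<in> with_periods n L"
  unfolding with_periods_def using sts_iso_iff sts_iso_inH2 sts_iso_periods by blast

lemma finite_period_classes: "finite (period_classes n L)"
  unfolding period_classes_def with_periods_def quotient_def
  using sts_finite by (auto intro: finite_subset)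

lemma Ep_eq_period_classes: "Ep m = period_classes m UNIV"
  unfolding Ep_def period_classes_def with_periods_def primitive_def by simp

lemma card_period_classes_eq:
  assumes maps_to: "\<And>p. p \<in> with_periods n L \<Longrightarrow> F p \<in> with_periods m L'"
    and preserves: "\<And>p1 p2. p1 \<in> with_periods n L \<Longrightarrow> p2 \<in> with_periods n L \<Longrightarrow>
                 (p1,p2) \<in> sts_iso n \<Longrightarrow> (F p1, F p2) \<in> sts_iso m"
    and reflects: "\<And>p1 p2. p1 \<in> with_periods n L \<Longrightarrow> p2 \<in> with_periods n L \<Longrightarrow>
                 (F p1, F p2) \<in> sts_iso m \<Longrightarrow> (p1,p2) \<in> sts_iso n"
    and surj: "\<And>q. q \<in> with_periods m L' \<Longrightarrow> \<exists>p\<in>with_periods n L. (F p, q) \<in> sts_iso m"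
  shows "card (period_classes n L) = card (period_classes m L')"
proof -
  have "bij_betw (\<lambda>C. sts_iso m `` (F ` C))
      (with_periods n L // sts_iso n) (with_periods m L' // sts_iso m)"
    by (rule bij_betw_quotients[OF equiv_sts_iso equiv_sts_iso _ _ with_periods_sts_iso
          maps_to preserves reflects surj])
       (auto simp: with_periods_def)
  then show ?thesis unfolding period_classes_def by (rule bij_betw_same_card)
qed

section \<open>Exchanging the directions and shearing\<close>

lemma comm_swap_cancel: "bij r \<Longrightarrow> bij u \<Longrightarrow> comm u r (comm r u x) = x"
  by (simp add: comm_apply bij_inv_f_f bij_f_inv_f)

lemma comm_swap_fixed: "bij r \<Longrightarrow> bij u \<Longrightarrow> comm u r x = x \<longleftrightarrow> comm r u x = x"
  by (metis comm_swap_cancel)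

lemma walk_swap: "walk r u i j a b \<Longrightarrow> walk u r i j b a"
  by (induction rule: walk.induct) (auto intro: walk.intros)

lemma walk_swap_iff: "walk u r i j b a \<longleftrightarrow> walk r u i j a b"
  using walk_swap by blast

lemma sts_swap: "p \<in> sts n \<Longrightarrow> prod.swap p \<in> sts n"
  by (cases p) (simp add: sts_iff square_adj_swap)

lemma periods_swap:
  assumes "(r,u) \<in> sts n"
  shows "periods n (u,r) = prod.swap ` periods n (r,u)"
proof -
  have b: "bij r" "bij u" using sts_bij assms by auto
  have "(b,a) \<in> periods n (u,r) \<longleftrightarrow> (a,b) \<in> periods n (r,u)" for a b
    unfolding periods_def
    by (simp add: edge_path_iff_walk[OF b] edge_path_iff_walk[OF b(2,1)] comm_swap_fixed[OF b] walk_swap_iff)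
  then show ?thesis by (simp add: set_eq_iff)
qed

lemma inH2_swap:
  assumes "(r,u) \<in> sts n"
  shows "inH2 n (u,r) \<longleftrightarrow> inH2 n (r,u)"
proof -
  have "{i. i < n \<and> comm u r i \<noteq> i} = {i. i < n \<and> comm r u i \<noteq> i}"
    using comm_swap_fixed[OF sts_bij[OF assms]] by simp
  then show ?thesis unfolding inH2_iff by simp
qed

lemma swap_with_periods:
  assumes "p \<in> with_periods n L"
  shows "prod.swap p \<in> with_periods n (prod.swap ` L)"
proof (cases p)
  case (Pair r u)
  then show ?thesis
    using assms sts_swap[of p n] inH2_swap[of r u n] periods_swap[of r u n]
    unfolding with_periods_def by simp
qed

lemma sts_iso_swap: "(p1,p2) \<in> sts_iso n \<Longrightarrow> (prod.swap p1, prod.swap p2) \<in> sts_iso n"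
  unfolding sts_iso_iff conjugates_def using sts_swap by (cases p1, cases p2) auto

lemma card_period_classes_swap:
  "card (period_classes n L) = card (period_classes n (prod.swap ` L))"
proof (rule card_period_classes_eq[where F = prod.swap])
  fix q assume q: "q \<in> with_periods n (prod.swap ` L)"
  have "prod.swap q \<in> with_periods n L" using swap_with_periods[OF q] by (simp add: image_image)
  moreover have "(prod.swap (prod.swap q), q) \<in> sts_iso n"
    using q by (simp add: with_periods_def sts_iso_refl)
  ultimately show "\<exists>p\<in>with_periods n L. (prod.swap p, q) \<in> sts_iso n" by blast
next
  fix p1 p2 assume "(prod.swap p1, prod.swap p2) \<in> sts_iso n"
  from sts_iso_swap[OF this] show "(p1, p2) \<in> sts_iso n" by simp
qed (simp_all add: swap_with_periods sts_iso_swap)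

definition shear :: "nat \<Rightarrow> (nat \<Rightarrow> nat) \<times> (nat \<Rightarrow> nat) \<Rightarrow> (nat \<Rightarrow> nat) \<times> (nat \<Rightarrow> nat)" where
  "shear k p = (fst p, snd p \<circ> (fst p ^^ k))"

definition unshear :: "nat \<Rightarrow> (nat \<Rightarrow> nat) \<times> (nat \<Rightarrow> nat) \<Rightarrow> (nat \<Rightarrow> nat) \<times> (nat \<Rightarrow> nat)" where
  "unshear k p = (fst p, snd p \<circ> (inv (fst p) ^^ k))"

definition shear_lattice :: "nat \<Rightarrow> (int \<times> int) set \<Rightarrow> (int \<times> int) set" where
  "shear_lattice k L = {(x,y). (x + int k * y, y) \<in> L}"

lemma shear_unshear: "bij r \<Longrightarrow> shear k (unshear k (r,u)) = (r,u)"
  and unshear_shear: "bij r \<Longrightarrow> unshear k (shear k (r,u)) = (r,u)"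
  unfolding shear_def unshear_def by (simp_all add: fun_eq_iff bij_funpow_inv_cancel)

lemma shear_lattice_inj: "shear_lattice k A = shear_lattice k B \<Longrightarrow> A = B"
  unfolding shear_lattice_def by (auto simp: set_eq_iff) (metis diff_add_cancel)+

lemma comm_comp_commuting:
  assumes "bij r" "bij u" "bij t" "t \<circ> r = r \<circ> t"
  shows "comm r (u \<circ> t) = comm r u"
proof -
  have "t (r y) = r (t y)" for y using assms(4) by (metis comp_apply)
  then show ?thesis
    unfolding comm_def using assms by (simp add: fun_eq_iff o_inv_distrib bij_f_inv_f)
qed

lemma comm_shear: "bij r \<Longrightarrow> bij u \<Longrightarrow> comm r (u \<circ> (r ^^ k)) = comm r u"
  by (rule comm_comp_commuting) (auto simp: fun_eq_iff funpow_swap1)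

lemma comm_unshear:
  assumes "bij r" "bij u"
  shows "comm r (u \<circ> (inv r ^^ k)) = comm r u"
proof -
  have "bij (u \<circ> (inv r ^^ k))" using assms by (simp add: bij_comp bij_imp_bij_inv)
  moreover have "u \<circ> (inv r ^^ k) \<circ> (r ^^ k) = u"
    using assms(1) by (simp add: fun_eq_iff bij_funpow_inv_cancel)
  ultimately show ?thesis using comm_shear[OF assms(1), of "u \<circ> (inv r ^^ k)" k] by simp
qed

lemma walk_comp_right:
  assumes b: "bij r" "bij u" "bij t" and t: "\<And>z. walk r u z (t z) h 0"
  shows "walk r (u \<circ> t) i j x y \<Longrightarrow> walk r u i j (x + h * y) y"
proof (induction rule: walk.induct)
  case walk_refl then show ?case by (simp add: walk.walk_refl)
next
  case (walk_right i j a b) from walk.walk_right[OF walk_right.IH] show ?case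
    by (rule walk_cong) simp_all
next
  case (walk_left i j a b) from walk.walk_left[OF walk_left.IH] show ?case
    by (rule walk_cong) simp_all
next
  case (walk_up i j a b) from walk.walk_up[OF walk_trans[OF t walk_up.IH]] show ?case
    by (rule walk_cong) (simp_all add: algebra_simps)
next
  case (walk_down i j a b)
  let ?w = "inv t (inv u j)"
  have "walk r u (t ?w) ?w (- h) (- 0)" using walk_reverse[OF b(1,2) t] .
  then have walk_back: "walk r u (inv u j) ?w (- h) 0" using b(3) by (simp add: bij_f_inv_f)
  have e: "inv (u \<circ> t) j = ?w" using b by (simp add: o_inv_distrib)
  from walk_trans[OF walk_back walk.walk_down[OF walk_down.IH]]
  show ?case unfolding e by (rule walk_cong) (simp_all add: algebra_simps)
qed

lemma walk_shear: "bij r \<Longrightarrow> bij u \<Longrightarrow> walk r (u \<circ> (r ^^ k)) i j x y \<Longrightarrow> walk r u i j (x + int k * y) y"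
  by (rule walk_comp_right) (simp_all add: walk_funpow_right)

lemma walk_unshear:
  assumes "bij r" "bij u" "walk r u i j x y"
  shows "walk r (u \<circ> (r ^^ k)) i j (x - int k * y) y"
proof -
  let ?u = "u \<circ> (r ^^ k)"
  have "u = ?u \<circ> (inv r ^^ k)" using assms(1) by (simp add: fun_eq_iff bij_funpow_inv_cancel)
  then have "walk r (?u \<circ> (inv r ^^ k)) i j x y" using assms(3) by simp
  moreover have "bij ?u" using assms(1,2) by (simp add: bij_comp)
  ultimately show ?thesis
    using walk_comp_right[of r ?u "inv r ^^ k" "- int k"] assms(1) walk_funpow_left
    by (simp add: bij_imp_bij_inv)
qed

lemma sts_comp_right:
  assumes "(r,u) \<in> sts n" "t permutes {..<n}" "\<And>z. z < n \<Longrightarrow> (z, inv t z) \<in> (square_adj n r (u \<circ> t))\<^sup>*"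
  shows "(r, u \<circ> t) \<in> sts n"
proof -
  have rp: "r permutes {..<n}" and up: "u permutes {..<n}" using sts_permutes[OF assms(1)] by auto
  have "(i,j) \<in> (square_adj n r (u \<circ> t))\<^sup>*" if "i < n" "j < n" for i j
  proof (rule rtrancl_square_adj_mono[of n r _ u])
    show "(i, j) \<in> (square_adj n r u)\<^sup>*" using assms(1) that sts_iff by blast
    fix z assume z: "z < n"
    show "(z, r z) \<in> (square_adj n r (u \<circ> t))\<^sup>*" using z by (rule square_adj_right)
    have "(inv t z, (u \<circ> t) (inv t z)) \<in> (square_adj n r (u \<circ> t))\<^sup>*"
      using permutes_lessThan_inv_less[OF assms(2) z] by (rule square_adj_up)
    then show "(z, u z) \<in> (square_adj n r (u \<circ> t))\<^sup>*"
      using assms(3)[OF z] permutes_inverses(1)[OF assms(2)] by (simp add: rtrancl_trans)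
  qed
  then show ?thesis using rp up assms(2) by (simp add: sts_iff permutes_compose)
qed

lemma sts_shear: "p \<in> sts n \<Longrightarrow> shear k p \<in> sts n"
proof (cases p)
  case (Pair r u)
  assume s: "p \<in> sts n"
  have rp: "r permutes {..<n}" using s Pair sts_permutes by auto
  have "inv (r ^^ k) = inv r ^^ k" using inv_fn permutes_bij[OF rp] by blast
  then show ?thesis unfolding Pair shear_def
    using sts_comp_right[of r u n "r ^^ k"] s Pair rp square_adj_funpow_left
    by (simp add: permutes_funpow)
qed

lemma sts_unshear: "p \<in> sts n \<Longrightarrow> unshear k p \<in> sts n"
proof (cases p)
  case (Pair r u)
  assume s: "p \<in> sts n"
  have rp: "r permutes {..<n}" using s Pair sts_permutes by auto
  have "inv (inv r ^^ k) z = (r ^^ k) z" for z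
    using bij_funpow_inv_cancel(1)[OF permutes_bij[OF rp]] permutes_bij[OF rp]
    by (intro inv_f_eq) (simp_all add: bij_is_inj bij_imp_bij_inv)
  then show ?thesis unfolding Pair unshear_def
    using sts_comp_right[of r u n "inv r ^^ k"] s Pair rp square_adj_funpow_right
    by (simp add: permutes_funpow permutes_inv)
qed

lemma periods_shear:
  assumes "(r,u) \<in> sts n"
  shows "periods n (shear k (r,u)) = shear_lattice k (periods n (r,u))"
proof -
  have b: "bij r" "bij u" using sts_bij[OF assms] by auto
  have bu: "bij (u \<circ> (r ^^ k))" using b by (simp add: bij_comp)
  have walk_iff: "walk r (u \<circ> (r ^^ k)) i j x y \<longleftrightarrow> walk r u i j (x + int k * y) y" for i j x y
    using walk_shear[OF b] walk_unshear[OF b, of i j "x + int k * y" y k] by auto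
  show ?thesis
    unfolding periods_def shear_def shear_lattice_def fst_conv snd_conv prod.case
    by (simp only: edge_path_iff_walk[OF b] edge_path_iff_walk[OF b(1) bu] comm_shear[OF b] walk_iff)
       auto
qed

lemma conjugates_shear:
  assumes "conjugates s n (r1,u1) (r2,u2)"
  shows "conjugates s n (shear k (r1,u1)) (shear k (r2,u2))"
proof -
  have r: "s (r1 x) = r2 (s x)" and u: "s (u1 x) = u2 (s x)" for x
    using assms unfolding conjugates_def by auto
  show ?thesis using assms funpow_commute[of s r1 r2, OF r]
    unfolding conjugates_def shear_def by (simp add: u)
qed

lemma conjugates_unshear:
  assumes "conjugates s n (r1,u1) (r2,u2)" "bij r1" "bij r2"
  shows "conjugates s n (unshear k (r1,u1)) (unshear k (r2,u2))"
proof -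
  have r: "s (inv r1 x) = inv r2 (s x)" and u: "s (u1 x) = u2 (s x)" for x
    using assms conjugates_inv_commute[of r1 r2 s] unfolding conjugates_def by auto
  show ?thesis using assms funpow_commute[of s "inv r1" "inv r2", OF r]
    unfolding conjugates_def unshear_def by (simp add: u)
qed

lemma shear_with_periods:
  assumes "p \<in> with_periods n L"
  shows "shear k p \<in> with_periods n (shear_lattice k L)"
proof (cases p)
  case (Pair r u)
  then have s: "(r,u) \<in> sts n" using assms with_periods_def by auto
  have "inH2 n (shear k (r,u))"
    using assms Pair comm_shear[OF sts_bij[OF s]] unfolding with_periods_def inH2_def shear_def
      by auto
  then show ?thesis using sts_shear[OF s] periods_shear[OF s] assms Pair unfolding with_periods_def
    by auto
qed

lemma unshear_with_periods:
  assumes "q \<in> with_periods n (shear_lattice k L)"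
  shows "unshear k q \<in> with_periods n L"
proof (cases q)
  case (Pair r u)
  then have s: "(r,u) \<in> sts n" using assms with_periods_def by auto
  have b: "bij r" "bij u" using sts_bij[OF s] by auto
  have s': "unshear k (r,u) \<in> sts n" by (rule sts_unshear[OF s])
  have "inH2 n (unshear k (r,u))"
    using assms Pair comm_unshear[OF b] unfolding with_periods_def inH2_def unshear_def by auto
  moreover have "periods n (unshear k (r,u)) = L"
  proof (rule shear_lattice_inj)
    have "shear_lattice k (periods n (unshear k (r,u))) = periods n (shear k (unshear k (r,u)))"
      using periods_shear[of "fst (unshear k (r,u))" "snd (unshear k (r,u))" n k] s' by simp
    also have "\<dots> = shear_lattice k L" using shear_unshear[OF b(1)] assms Pair
      unfolding with_periods_def by simp
    finally show "shear_lattice k (periods n (unshear k (r,u))) = shear_lattice k L" .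
  qed
  ultimately show ?thesis using s' Pair unfolding with_periods_def by auto
qed

lemma sts_iso_shear:
  assumes "(p1,p2) \<in> sts_iso n"
  shows "(shear k p1, shear k p2) \<in> sts_iso n"
proof -
  obtain r1 u1 r2 u2 s where p: "p1 = (r1,u1)" "p2 = (r2,u2)" and c: "conjugates s n p1 p2"
    and "p1 \<in> sts n" "p2 \<in> sts n"
    using assms sts_iso_iff by (cases p1, cases p2) auto
  then show ?thesis using conjugates_shear[of s n r1 u1 r2 u2 k] sts_shear sts_iso_iff by auto
qed

lemma sts_iso_unshear:
  assumes "(p1,p2) \<in> sts_iso n"
  shows "(unshear k p1, unshear k p2) \<in> sts_iso n"
proof -
  obtain r1 u1 r2 u2 s where p: "p1 = (r1,u1)" "p2 = (r2,u2)" and c: "conjugates s n p1 p2"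
    and "p1 \<in> sts n" "p2 \<in> sts n"
    using assms sts_iso_iff by (cases p1, cases p2) auto
  then show ?thesis
    using conjugates_unshear[of s n r1 u1 r2 u2 k] sts_unshear sts_bij sts_iso_iff by auto
qed

lemma card_period_classes_shear:
  "card (period_classes n L) = card (period_classes n (shear_lattice k L))"
proof (rule card_period_classes_eq[where F = "shear k"])
  show "(p1, p2) \<in> sts_iso n"
    if "p1 \<in> with_periods n L" "p2 \<in> with_periods n L" "(shear k p1, shear k p2) \<in> sts_iso n" for p1 p2
  proof -
    obtain r1 u1 r2 u2 where p: "p1 = (r1,u1)" "p2 = (r2,u2)" by (cases p1, cases p2)
    have "bij r1" "bij r2" using that p sts_bij unfolding with_periods_def by auto
    then show ?thesis using sts_iso_unshear[OF that(3), of k] p unshear_shear by simp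
  qed
  fix q assume q: "q \<in> with_periods n (shear_lattice k L)"
  obtain r u where qq: "q = (r,u)" by (cases q)
  have "q \<in> sts n" using q with_periods_def by auto
  then have "(shear k (unshear k q), q) \<in> sts_iso n"
    using shear_unshear[OF sts_bij(1)] sts_iso_refl qq by simp
  then show "\<exists>p\<in>with_periods n L. (shear k p, q) \<in> sts_iso n"
    using unshear_with_periods[OF q] by blast
qed (simp_all add: shear_with_periods sts_iso_shear)

section \<open>Horizontal stretching\<close>

text \<open>The \<open>e\<close>-fold horizontal stretch of a surface with \<open>m\<close> squares: square \<open>x + m * i\<close>
  (\<open>x < m\<close>, \<open>i < e\<close>) is the \<open>i\<close>-th copy of square \<open>x\<close>; moving right passes through the
  copies \<open>0, \<dots>, e - 1\<close> of \<open>x\<close> before the original gluing \<open>r\<close> is applied.\<close>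

definition stretch_right :: "nat \<Rightarrow> nat \<Rightarrow> (nat \<Rightarrow> nat) \<Rightarrow> nat \<Rightarrow> nat" where
  "stretch_right m e r k =
     (if k < m * e then (if k div m + 1 < e then k + m else r (k mod m)) else k)"

definition stretch_up :: "nat \<Rightarrow> nat \<Rightarrow> (nat \<Rightarrow> nat) \<Rightarrow> nat \<Rightarrow> nat" where
  "stretch_up m e u k = (if k < m * e then u (k mod m) + m * (k div m) else k)"

definition stretch :: "nat \<Rightarrow> nat \<Rightarrow> (nat \<Rightarrow> nat) \<times> (nat \<Rightarrow> nat) \<Rightarrow> (nat \<Rightarrow> nat) \<times> (nat \<Rightarrow> nat)" where
  "stretch m e p = (stretch_right m e (fst p), stretch_up m e (snd p))"

lemma copy_less: "x < m \<Longrightarrow> i < e \<Longrightarrow> x + m * i < m * (e::nat)"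
proof -
  assume a: "x < m" "i < e"
  have "x + m * i < m + m * i" using a by simp
  also have "\<dots> = m * (i + 1)" by (simp add: algebra_simps)
  also have "\<dots> \<le> m * e" using a by (intro mult_le_mono2) simp
  finally show ?thesis .
qed

lemma copy_cases:
  assumes "k < m * (e::nat)"
  obtains x i where "k = x + m * i" "x < m" "i < e"
proof -
  have "m > 0" using assms by (cases m) auto
  then show ?thesis
    using that[of "k mod m" "k div m"] assms by (simp add: div_less_iff_less_mult mult.commute)
qed

lemma copy_eq_iff:
  assumes "x < m" "x' < (m::nat)"
  shows "x + m * i = x' + m * i' \<longleftrightarrow> x = x' \<and> i = i'"
proof
  assume h: "x + m * i = x' + m * i'"
  have "(x + m * i) mod m = (x' + m * i') mod m" "(x + m * i) div m = (x' + m * i') div m"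
    using h by simp_all
  then show "x = x' \<and> i = i'" using assms by simp
qed simp

definition scale_lattice :: "nat \<Rightarrow> (int \<times> int) set \<Rightarrow> (int \<times> int) set" where
  "scale_lattice e L = {(x,y). int e dvd x \<and> (x div int e, y) \<in> L}"

lemma scale_lattice_inj: "e > 0 \<Longrightarrow> scale_lattice e A = scale_lattice e B \<Longrightarrow> A = B"
  unfolding scale_lattice_def set_eq_iff by (metis (no_types, lifting) case_prod_conv dvd_triv_left
      mem_Collect_eq nonzero_mult_div_cancel_left of_nat_0_eq_iff not_gr0 surj_pair)

locale stretch_data =
  fixes m e :: nat and r u :: "nat \<Rightarrow> nat"
  assumes m: "m > 0" and e: "e > 0"
    and rp: "r permutes {..<m}" and up: "u permutes {..<m}"
begin

abbreviation "R \<equiv> stretch_right m e r"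
abbreviation "U \<equiv> stretch_up m e u"

lemmas r_less = permutes_lessThan_less[OF rp] and u_less = permutes_lessThan_less[OF up]
  and r_inv_less = permutes_lessThan_inv_less[OF rp] and u_inv_less = permutes_lessThan_inv_less[OF up]

lemma bij_r: "bij r" and bij_u: "bij u" using rp up permutes_bij by blast+

lemma R_copy: "x < m \<Longrightarrow> i < e \<Longrightarrow>
    R (x + m * i) = (if i + 1 < e then x + m * (i + 1) else r x)"
  unfolding stretch_right_def using copy_less[of x m i e] by (simp add: algebra_simps)

lemma U_copy: "x < m \<Longrightarrow> i < e \<Longrightarrow> U (x + m * i) = u x + m * i"
  unfolding stretch_up_def using copy_less[of x m i e] by simp

lemma R_outside: "\<not> k < m * e \<Longrightarrow> R k = k" unfolding stretch_right_def by simp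
lemma U_outside: "\<not> k < m * e \<Longrightarrow> U k = k" unfolding stretch_up_def by simp

lemma R_less: "k < m * e \<Longrightarrow> R k < m * e"
proof -
  assume "k < m * e"
  then obtain x i where k: "k = x + m * i" "x < m" "i < e" by (rule copy_cases)
  show ?thesis
  proof (cases "i + 1 < e")
    case True then show ?thesis using k R_copy copy_less[of x m "i+1" e] by simp
  next
    case False
    have "m \<le> m * e" using e by simp
    then have "r x < m * e" using r_less[OF k(2)] by linarith
    then show ?thesis using k R_copy False by simp
  qed
qed

lemma U_less: "k < m * e \<Longrightarrow> U k < m * e"
proof -
  assume "k < m * e"
  then obtain x i where k: "k = x + m * i" "x < m" "i < e" by (rule copy_cases)
  then show ?thesis using U_copy copy_less[of "u x" m i e] u_less by simp
qed

lemma R_inj: "inj_on R {..<m * e}"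
proof (rule inj_onI)
  fix k1 k2 assume k1: "k1 \<in> {..<m * e}" and k2: "k2 \<in> {..<m * e}" and eq: "R k1 = R k2"
  obtain x1 i1 where a: "k1 = x1 + m * i1" "x1 < m" "i1 < e" using k1 by (auto elim: copy_cases)
  obtain x2 i2 where b: "k2 = x2 + m * i2" "x2 < m" "i2 < e" using k2 by (auto elim: copy_cases)
  have rx1: "r x1 < m" using r_less a by blast
  have rx2: "r x2 < m" using r_less b by blast
  show "k1 = k2"
  proof (cases "i1 + 1 < e"; cases "i2 + 1 < e")
    assume c: "i1 + 1 < e" "i2 + 1 < e"
    then have "x1 + m * (i1 + 1) = x2 + m * (i2 + 1)" using eq a b R_copy by simp
    then show ?thesis using a b copy_eq_iff by simp
  next
    assume c: "i1 + 1 < e" "\<not> i2 + 1 < e"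
    then have "x1 + m * (i1 + 1) = r x2" using eq a b R_copy by simp
    then show ?thesis using rx2 by (simp add: algebra_simps)
  next
    assume c: "\<not> i1 + 1 < e" "i2 + 1 < e"
    then have "x2 + m * (i2 + 1) = r x1" using eq a b R_copy by simp
    then show ?thesis using rx1 by (simp add: algebra_simps)
  next
    assume c: "\<not> i1 + 1 < e" "\<not> i2 + 1 < e"
    then have "r x1 = r x2" using eq a b R_copy by simp
    then have "x1 = x2" using bij_r by (simp add: bij_is_inj inj_eq)
    moreover have "i1 = i2" using c a b by simp
    ultimately show ?thesis using a b by simp
  qed
qed

lemma U_inj: "inj_on U {..<m * e}"
proof (rule inj_onI)
  fix k1 k2 assume k1: "k1 \<in> {..<m * e}" and k2: "k2 \<in> {..<m * e}" and eq: "U k1 = U k2"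
  obtain x1 i1 where a: "k1 = x1 + m * i1" "x1 < m" "i1 < e" using k1 by (auto elim: copy_cases)
  obtain x2 i2 where b: "k2 = x2 + m * i2" "x2 < m" "i2 < e" using k2 by (auto elim: copy_cases)
  have "u x1 + m * i1 = u x2 + m * i2" using eq a b U_copy by simp
  then have "u x1 = u x2" "i1 = i2" using copy_eq_iff u_less a b by blast+
  then show "k1 = k2" using a b bij_u by (simp add: bij_is_inj inj_eq)
qed

lemma R_permutes: "R permutes {..<m * e}"
  by (rule permutes_lessThan_if_inj_on[OF R_inj R_less R_outside])

lemma U_permutes: "U permutes {..<m * e}"
  by (rule permutes_lessThan_if_inj_on[OF U_inj U_less U_outside])

lemma bij_R: "bij R" using R_permutes permutes_bij by blast
lemma bij_U: "bij U" using U_permutes permutes_bij by blast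

lemma R_inv_copy: "x < m \<Longrightarrow> i < e \<Longrightarrow>
    inv R (x + m * i) = (if 0 < i then x + m * (i - 1) else inv r x + m * (e - 1))"
proof -
  assume a: "x < m" "i < e"
  show ?thesis
  proof (cases "0 < i")
    case True
    have "R (x + m * (i - 1)) = x + m * i" using R_copy[OF a(1), of "i - 1"] a True by simp
    then show ?thesis using True bij_inv_f_f[OF bij_R] by metis
  next
    case False
    have "R (inv r x + m * (e - 1)) = x"
      using R_copy[OF r_inv_less[OF a(1)], of "e - 1"] e bij_f_inv_f[OF bij_r] by simp
    then show ?thesis using False bij_inv_f_f[OF bij_R]
      by (metis add.right_neutral mult_0_right not_gr0)
  qed
qed

lemma U_inv_copy: "x < m \<Longrightarrow> i < e \<Longrightarrow> inv U (x + m * i) = inv u x + m * i"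
proof -
  assume a: "x < m" "i < e"
  have "U (inv u x + m * i) = x + m * i"
    using U_copy[OF u_inv_less[OF a(1)] a(2)] bij_f_inv_f[OF bij_u] by simp
  then show ?thesis using bij_inv_f_f[OF bij_U] by metis
qed

lemma R_funpow_copy: "x < m \<Longrightarrow> i + j < e \<Longrightarrow> (R ^^ j) (x + m * i) = x + m * (i + j)"
proof (induction j)
  case 0 then show ?case by simp
next
  case (Suc j)
  then have "(R ^^ Suc j) (x + m * i) = R (x + m * (i + j))" by simp
  also have "\<dots> = x + m * (i + Suc j)" using R_copy[of x "i + j"] Suc.prems by simp
  finally show ?case .
qed

lemma R_funpow_e: "x < m \<Longrightarrow> (R ^^ e) x = r x"
proof -
  assume x: "x < m"
  have "(R ^^ (e - 1)) (x + m * 0) = x + m * (0 + (e - 1))"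
    using R_funpow_copy[OF x, of 0 "e - 1"] e by simp
  then have "(R ^^ (e - 1)) x = x + m * (e - 1)" by simp
  moreover have "(R ^^ e) x = R ((R ^^ (e - 1)) x)"
  proof -
    have "e = Suc (e - 1)" using e by simp
    then show ?thesis by (metis funpow.simps(2) o_apply)
  qed
  moreover have "R (x + m * (e - 1)) = r x" using R_copy[OF x, of "e - 1"] e by simp
  ultimately show ?thesis by simp
qed

lemma U_base: "x < m \<Longrightarrow> U x = u x"
  using U_copy[of x 0] e by simp

lemma comm_copy:
  assumes x: "x < m" and i: "i < e"
  shows "comm R U (x + m * i) = (if i = 0 then comm r u x else x + m * i)"
proof (cases "i = 0")
  case False
  define z where "z = inv u x + m * (i - 1)"
  have zl: "inv u x < m" using u_inv_less[OF x] .
  have "U z = x + m * (i - 1)" unfolding z_def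
    using U_copy[OF zl, of "i - 1"] i bij_f_inv_f[OF bij_u] by simp
  then have Rz: "R (U z) = x + m * i" using R_copy[OF x, of "i - 1"] i False by simp
  have "R z = inv u x + m * i" unfolding z_def using R_copy[OF zl, of "i - 1"] i False by simp
  then have "U (R z) = x + m * i" using U_copy[OF zl i] bij_f_inv_f[OF bij_u] by simp
  then have "comm R U (x + m * i) = x + m * i" using comm_right_up[OF bij_R bij_U, of z] Rz by simp
  then show ?thesis using False by simp
next
  case True
  define z where "z = inv u (inv r x) + m * (e - 1)"
  have zl: "inv u (inv r x) < m" using u_inv_less[OF r_inv_less[OF x]] .
  have "U z = inv r x + m * (e - 1)" unfolding z_def
    using U_copy[OF zl, of "e - 1"] e bij_f_inv_f[OF bij_u] by simp
  then have Rz: "R (U z) = x" using R_copy[OF r_inv_less[OF x], of "e - 1"] e bij_f_inv_f[OF bij_r]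
    by simp
  have "R z = r (inv u (inv r x))" unfolding z_def using R_copy[OF zl, of "e - 1"] e by simp
  then have "U (R z) = u (r (inv u (inv r x)))" using U_base r_less[OF zl] by simp
  then have "comm R U x = comm r u x" using comm_right_up[OF bij_R bij_U, of z] Rz
    by (simp add: comm_apply)
  then show ?thesis using True by simp
qed

lemma moved_points_stretch: "{k. k < m * e \<and> comm R U k \<noteq> k} = {x. x < m \<and> comm r u x \<noteq> x}"
proof (rule set_eqI, rule iffI)
  fix k assume "k \<in> {k. k < m * e \<and> comm R U k \<noteq> k}"
  then have k: "k < m * e" "comm R U k \<noteq> k" by auto
  then obtain x i where ki: "k = x + m * i" "x < m" "i < e" by (auto elim: copy_cases)
  have "i = 0"
  proof (rule ccontr)
    assume "i \<noteq> 0"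
    then show False using comm_copy[OF ki(2,3)] k ki by simp
  qed
  then show "k \<in> {x. x < m \<and> comm r u x \<noteq> x}" using k ki comm_copy[of x 0] e by simp
next
  fix x assume "x \<in> {x. x < m \<and> comm r u x \<noteq> x}"
  then have x: "x < m" "comm r u x \<noteq> x" by auto
  have "m \<le> m * e" using e by simp
  then have "x < m * e" using x by linarith
  moreover have "comm R U x = comm r u x" using comm_copy[OF x(1), of 0] e by simp
  ultimately show "x \<in> {k. k < m * e \<and> comm R U k \<noteq> k}" using x by simp
qed

lemma inH2_stretch: "inH2 (m * e) (R, U) \<longleftrightarrow> inH2 m (r, u)"
  unfolding inH2_iff moved_points_stretch ..

lemma sts_stretch:
  assumes "(r,u) \<in> sts m"
  shows "(R,U) \<in> sts (m * e)"
proof -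
  have me: "m \<le> m * e" using e by simp
  let ?H = "square_adj (m * e) R U"
  have l0: "(x, y) \<in> ?H\<^sup>*" if "x < m" "y < m" for x y
  proof (rule rtrancl_square_adj_mono[of m r ?H u])
    show "(x, y) \<in> (square_adj m r u)\<^sup>*" using assms that sts_iff by blast
    fix z assume z: "z < m"
    then have "z < m * e" using me by linarith
    from square_adj_funpow_right[where u = U, OF R_permutes this, of e] show "(z, r z) \<in> ?H\<^sup>*"
      using R_funpow_e[OF z] by simp
    from square_adj_up[where r = R and u = U, OF \<open>z < m * e\<close>] show "(z, u z) \<in> ?H\<^sup>*"
      using U_base[OF z] by simp
  qed
  have "(k1, k2) \<in> ?H\<^sup>*" if k12: "k1 < m * e" "k2 < m * e" for k1 k2
  proof -
    obtain x i where a: "k1 = x + m * i" "x < m" "i < e" using k12(1) by (auto elim: copy_cases)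
    obtain y j where b: "k2 = y + m * j" "y < m" "j < e" using k12(2) by (auto elim: copy_cases)
    have s1: "(k1, (R ^^ (e - 1 - i)) k1) \<in> ?H\<^sup>*"
      by (rule square_adj_funpow_right[OF R_permutes k12(1)])
    have s1e: "(R ^^ (e - 1 - i)) k1 = x + m * (e - 1)"
      using R_funpow_copy[OF a(2), of i "e - 1 - i"] a by simp
    have s2: "(x + m * (e - 1), R (x + m * (e - 1))) \<in> ?H\<^sup>*"
      by (rule square_adj_right) (use copy_less[OF a(2), of "e - 1" e] e in simp)
    have s2e: "R (x + m * (e - 1)) = r x" using R_copy[OF a(2), of "e - 1"] e by simp
    have s3: "(r x, y) \<in> ?H\<^sup>*" using l0 r_less a b by blast
    have s4: "(y, (R ^^ j) y) \<in> ?H\<^sup>*"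
      by (rule square_adj_funpow_right[OF R_permutes]) (use b me in linarith)
    have s4e: "(R ^^ j) y = k2" using R_funpow_copy[OF b(2), of 0 j] b by simp
    have "(k1, r x) \<in> ?H\<^sup>*" using rtrancl_trans[OF s1[unfolded s1e] s2[unfolded s2e]] .
    then have "(k1, y) \<in> ?H\<^sup>*" using rtrancl_trans[OF _ s3] by blast
    then show ?thesis using rtrancl_trans[OF _ s4] s4e by simp
  qed
  then show ?thesis unfolding sts_iff using R_permutes U_permutes by blast
qed

lemma R_inv_funpow_e: "x < m \<Longrightarrow> (inv R ^^ e) x = inv r x"
proof -
  assume x: "x < m"
  have "(R ^^ e) (inv r x) = x" using R_funpow_e[OF r_inv_less[OF x]] bij_f_inv_f[OF bij_r] by simp
  then show ?thesis using bij_funpow_inv_cancel(1)[OF bij_R, of e "inv r x"] by simp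
qed

lemma U_inv_base: "x < m \<Longrightarrow> inv U x = inv u x"
  using U_inv_copy[of x 0] e by simp

lemma walk_lift:
  assumes "walk r u x y a b" "x < m"
  shows "y < m \<and> walk R U x y (int e * a) b"
  using assms
proof (induction rule: walk.induct)
  case (walk_refl i) then show ?case by (simp add: walk.walk_refl)
next
  case (walk_right i j a b)
  then have j: "j < m" and p: "walk R U i j (int e * a) b" by auto
  from walk_trans[OF walk_funpow_right[of R U j e] p] have "walk R U i (r j) (int e * a + int e) b"
    using R_funpow_e[OF j] by simp
  then have "walk R U i (r j) (int e * (a + 1)) b" by (rule walk_cong) (simp_all add: algebra_simps)
  then show ?case using r_less[OF j] by simp
next
  case (walk_left i j a b)
  then have j: "j < m" and p: "walk R U i j (int e * a) b" by auto
  from walk_trans[OF walk_funpow_left[of R U j e] p] have "walk R U i (inv r j) (int e * a + - int e) b"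
    using R_inv_funpow_e[OF j] by simp
  then have "walk R U i (inv r j) (int e * (a - 1)) b"
    by (rule walk_cong) (simp_all add: algebra_simps)
  then show ?case using r_inv_less[OF j] by simp
next
  case (walk_up i j a b)
  then have j: "j < m" and p: "walk R U i j (int e * a) b" by auto
  from walk.walk_up[OF p] show ?case using u_less[OF j] U_base[OF j] by simp
next
  case (walk_down i j a b)
  then have j: "j < m" and p: "walk R U i j (int e * a) b" by auto
  from walk.walk_down[OF p] show ?case using u_inv_less[OF j] U_inv_base[OF j] by simp
qed

text \<open>Walks in the stretch starting at copy \<open>i0\<close> of \<open>x0\<close> lie over walks of the original surface;
  the horizontal holonomy is multiplied by \<open>e\<close> and shifted by the change of copy.\<close>
definition over_walk :: "nat \<Rightarrow> nat \<Rightarrow> nat \<Rightarrow> int \<Rightarrow> int \<Rightarrow> bool" where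
  "over_walk x0 i0 k A B \<longleftrightarrow> (\<exists>y j a. k = y + m * j \<and> y < m \<and> j < e \<and>
     A = int e * a + int j - int i0 \<and> walk r u x0 y a B)"

lemma over_walk_right:
  assumes "over_walk x0 i0 k A B"
  shows "over_walk x0 i0 (R k) (A + 1) B"
proof -
  obtain y j a where h: "k = y + m * j" "y < m" "j < e" "A = int e * a + int j - int i0" "walk r u x0 y a B"
    using assms over_walk_def by blast
  show ?thesis
  proof (cases "j + 1 < e")
    case True
    then have "R k = y + m * (j + 1)" "A + 1 = int e * a + int (j + 1) - int i0" using R_copy h
      by simp_all
    then show ?thesis unfolding over_walk_def using h(2,5) True by blast
  next
    case False
    then have "R k = r y + m * 0" using R_copy h by simp
    moreover have "int j + 1 = int e" using False h(3) by linarith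
    then have "A + 1 = int e * (a + 1) + int 0 - int i0" using h(4) by (simp add: algebra_simps)
    ultimately show ?thesis unfolding over_walk_def using r_less[OF h(2)] e walk.walk_right[OF h(5)]
      by blast
  qed
qed

lemma over_walk_left:
  assumes "over_walk x0 i0 k A B"
  shows "over_walk x0 i0 (inv R k) (A - 1) B"
proof -
  obtain y j a where h: "k = y + m * j" "y < m" "j < e" "A = int e * a + int j - int i0" "walk r u x0 y a B"
    using assms over_walk_def by blast
  show ?thesis
  proof (cases "0 < j")
    case True
    then have "inv R k = y + m * (j - 1)" "A - 1 = int e * a + int (j - 1) - int i0"
      using R_inv_copy h by (simp_all add: of_nat_diff)
    then show ?thesis unfolding over_walk_def using h(2,3,5) by (meson less_imp_diff_less)
  next
    case False
    then have "inv R k = inv r y + m * (e - 1)" using R_inv_copy[OF h(2,3)] h(1) by simp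
    moreover have "A - 1 = int e * (a - 1) + int (e - 1) - int i0"
      using False h(4) e by (simp add: of_nat_diff algebra_simps)
    ultimately show ?thesis unfolding over_walk_def
      using r_inv_less[OF h(2)] e walk.walk_left[OF h(5)]
      by (meson diff_less zero_less_one)
  qed
qed

lemma over_walk_up: "over_walk x0 i0 k A B \<Longrightarrow> over_walk x0 i0 (U k) A (B + 1)"
  and over_walk_down: "over_walk x0 i0 k A B \<Longrightarrow> over_walk x0 i0 (inv U k) A (B - 1)"
  unfolding over_walk_def using U_copy U_inv_copy u_less u_inv_less walk.walk_up walk.walk_down
  by metis+

lemma walk_project:
  assumes "walk R U k0 k A B" "x0 < m" "i0 < e" "k0 = x0 + m * i0"
  shows "over_walk x0 i0 k A B"
  using assms
proof (induction rule: walk.induct)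
  case (walk_refl i)
  then show ?case unfolding over_walk_def
    by (intro exI[of _ x0] exI[of _ i0] exI[of _ 0]) (simp add: walk.walk_refl)
qed (auto intro: over_walk_right over_walk_left over_walk_up over_walk_down)

lemma walk_project_base:
  assumes "walk R U x y A B" "x < m" "y < m"
  shows "\<exists>a. A = int e * a \<and> walk r u x y a B"
proof -
  obtain y' j a where h: "y = y' + m * j" "y' < m" "j < e" "A = int e * a + int j - int 0" "walk r u x y' a B"
    using walk_project[OF assms(1,2), of 0] e unfolding over_walk_def by auto
  then have "j = 0" "y' = y" using copy_eq_iff[OF assms(3) h(2), of 0 j] by simp_all
  then show ?thesis using h by auto
qed

lemma periods_stretch:
  assumes "(r,u) \<in> sts m"
  shows "periods (m * e) (R,U) = scale_lattice e (periods m (r,u))"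
proof -
  have b: "bij r" "bij u" using bij_r bij_u by auto
  have me: "m \<le> m * e" using e by simp
  have cs: "(k < m * e \<and> comm R U k \<noteq> k) \<longleftrightarrow> (k < m \<and> comm r u k \<noteq> k)" for k
    using moved_points_stretch by blast
  show ?thesis
  proof (rule set_eqI, clarify)
    fix A B
    show "(A,B) \<in> periods (m * e) (R,U) \<longleftrightarrow> (A,B) \<in> scale_lattice e (periods m (r,u))"
    proof
      assume "(A,B) \<in> periods (m * e) (R,U)"
      then obtain x y where xy: "x < m * e" "y < m * e" "comm R U x \<noteq> x" "comm R U y \<noteq> y" "walk R U x y A B"
        unfolding periods_def using edge_path_iff_walk[OF bij_R bij_U] by auto
      then have xy': "x < m" "y < m" "comm r u x \<noteq> x" "comm r u y \<noteq> y" using cs by blast+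
      obtain a where "A = int e * a" "walk r u x y a B" using walk_project_base[OF xy(5) xy'(1,2)]
        by blast
      then show "(A,B) \<in> scale_lattice e (periods m (r,u))"
        unfolding scale_lattice_def periods_def using xy' edge_path_iff_walk[OF b] e by auto
    next
      assume "(A,B) \<in> scale_lattice e (periods m (r,u))"
      then obtain x y where xy: "x < m" "y < m" "comm r u x \<noteq> x" "comm r u y \<noteq> y"
        "walk r u x y (A div int e) B" "int e dvd A"
        unfolding periods_def scale_lattice_def using edge_path_iff_walk[OF b] by auto
      then have xy': "x < m * e" "y < m * e" "comm R U x \<noteq> x" "comm R U y \<noteq> y" using cs by blast+
      have "walk R U x y (int e * (A div int e)) B" using walk_lift[OF xy(5,1)] by blast
      then have "walk R U x y A B" using xy(6) by simp
      then show "(A,B) \<in> periods (m * e) (R,U)"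
        unfolding periods_def using xy' edge_path_iff_walk[OF bij_R bij_U] by auto
    qed
  qed
qed

end

context stretch_data
begin

lemma square_adj_project:
  assumes "(k, k') \<in> (square_adj (m * e) R U)\<^sup>*"
  shows "(k mod m, k' mod m) \<in> (square_adj m r u)\<^sup>*"
  using assms
proof (induction rule: rtrancl_induct)
  case base then show ?case by simp
next
  case (step y z)
  from step(2) have y: "y < m * e" and z: "z = R y \<or> z = U y" unfolding square_adj_def by auto
  obtain x i where yi: "y = x + m * i" "x < m" "i < e" using y by (auto elim: copy_cases)
  have "z mod m = x \<or> z mod m = r x \<or> z mod m = u x"
  proof (cases "z = R y")
    case True
    then have zR: "z = (if i + 1 < e then x + m * (i + 1) else r x)" using R_copy[OF yi(2,3)] yi
      by simp
    show ?thesis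
    proof (cases "i + 1 < e")
      case True
      then have "z = x + m * (i + 1)" using zR by simp
      then have "z mod m = x" using yi(2) by (simp only: mod_mult_self2 mod_less)
      then show ?thesis by simp
    next
      case False
      then have "z = r x" using zR by simp
      then show ?thesis using r_less[OF yi(2)] by simp
    qed
  next
    case False
    then have "z = U y" using z by simp
    then have "z = u x + m * i" using U_copy[OF yi(2,3)] yi by simp
    then have "z mod m = u x" using u_less[OF yi(2)] by (simp only: mod_mult_self2 mod_less)
    then show ?thesis by simp
  qed
  moreover have "y mod m = x" using yi by simp
  ultimately have "(y mod m, z mod m) \<in> (square_adj m r u)\<^sup>*"
    using square_adj_right[OF yi(2), of r u] square_adj_up[OF yi(2), of u r] by auto
  with step.IH show ?case by simp
qed

lemma sts_unstretch:
  assumes "(R,U) \<in> sts (m * e)"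
  shows "(r,u) \<in> sts m"
proof -
  have "m \<le> m * e" using e by simp
  have "(x,y) \<in> (square_adj m r u)\<^sup>*" if "x < m" "y < m" for x y
  proof -
    have "(x,y) \<in> (square_adj (m * e) R U)\<^sup>*" using assms that \<open>m \<le> m * e\<close> sts_iff
      by (metis less_le_trans)
    from square_adj_project[OF this] show ?thesis using that by simp
  qed
  then show ?thesis using rp up sts_iff by blast
qed

end

lemma conjugates_stretch:
  assumes "stretch_data m e r1 u1" "stretch_data m e r2 u2" "conjugates s m (r1,u1) (r2,u2)"
  shows "conjugates (stretch_up m e s) (m * e) (stretch m e (r1,u1)) (stretch m e (r2,u2))"
proof -
  interpret A: stretch_data m e r1 u1 by fact
  interpret B: stretch_data m e r2 u2 by fact
  have sp: "s permutes {..<m}" and r: "\<And>x. s (r1 x) = r2 (s x)" and u: "\<And>x. s (u1 x) = u2 (s x)"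
    using assms(3) unfolding conjugates_def by auto
  \<comment> \<open>Regarding \<open>s\<close> as an upward gluing makes \<open>C.U\<close> its copywise extension.\<close>
  interpret C: stretch_data m e r1 s using A.m A.e A.rp sp by unfold_locales
  have "C.U (A.R k) = B.R (C.U k) \<and> C.U (A.U k) = B.U (C.U k)" for k
  proof (cases "k < m * e")
    case True
    then obtain x i where k: "k = x + m * i" "x < m" "i < e" by (auto elim: copy_cases)
    have "C.U (A.R k) = B.R (C.U k)"
    proof (cases "i + 1 < e")
      case True
      have "C.U (A.R k) = C.U (x + m * (i + 1))" using A.R_copy[OF k(2,3)] k(1) True by simp
      also have "\<dots> = s x + m * (i + 1)" using C.U_copy[OF k(2) True] .
      also have "\<dots> = B.R (C.U k)"
        using B.R_copy[OF C.u_less[OF k(2)] k(3)] C.U_copy[OF k(2,3)] k(1) True by simp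
      finally show ?thesis .
    next
      case False
      then show ?thesis using k A.R_copy B.R_copy C.U_copy[of "r1 x" 0] C.U_copy C.u_less A.r_less r A.e
        by simp
    qed
    moreover have "C.U (A.U k) = B.U (C.U k)"
      using k A.U_copy B.U_copy C.U_copy C.u_less A.u_less u by simp
    ultimately show ?thesis by blast
  next
    case False
    then show ?thesis using A.R_outside A.U_outside B.R_outside B.U_outside C.U_outside by simp
  qed
  then show ?thesis unfolding conjugates_def stretch_def using C.U_permutes by simp
qed

text \<open>The relabelling \<open>t\<close> maps the cone point \<open>c1\<close> of copy \<open>0\<close> to a cone point, hence into
  copy \<open>0\<close>; as a walk from copy \<open>0\<close> to copy \<open>j\<close> has horizontal holonomy \<open>\<equiv> j (mod e)\<close>,
  \<open>t\<close> preserves all of copy \<open>0\<close>.\<close>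
lemma conjugates_stretch_copy0:
  assumes "stretch_data m e r1 u1" "stretch_data m e r2 u2" "(r1,u1) \<in> sts m" "inH2 m (r1,u1)"
    and "conjugates t (m * e) (stretch m e (r1,u1)) (stretch m e (r2,u2))" and x: "x < m"
  shows "t x < m"
proof -
  interpret A: stretch_data m e r1 u1 by fact
  interpret B: stretch_data m e r2 u2 by fact
  have tc: "conjugates t (m * e) (A.R, A.U) (B.R, B.U)" using assms(5) unfolding stretch_def by simp
  have tp: "t permutes {..<m * e}" using tc unfolding conjugates_def by auto
  obtain c1 where c1: "c1 < m" "comm r1 u1 c1 \<noteq> c1" using cone_point_exists[OF assms(4)] by blast
  have "m \<le> m * e" using A.e by simp
  then have "c1 < m * e" using c1(1) by linarith
  then have "t c1 < m * e" using tp by (metis lessThan_iff permutes_in_image)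
  moreover have "comm A.R A.U c1 = comm r1 u1 c1" using A.comm_copy[OF c1(1), of 0] A.e by simp
  then have "comm B.R B.U (t c1) \<noteq> t c1"
    using c1 comm_conjugates[OF tc A.bij_R A.bij_U B.bij_R B.bij_U, of c1] permutes_inj[OF tp]
    by (metis injD)
  ultimately have tc1: "t c1 < m" using B.moved_points_stretch by blast
  obtain a b where "walk r1 u1 c1 x a b" using sts_walk[OF assms(3) c1(1) x] by blast
  then have "walk A.R A.U c1 x (int e * a) b" using A.walk_lift c1 by blast
  then have "walk B.R B.U (t c1) (t x) (int e * a) b"
    using walk_conjugates[OF tc A.bij_R A.bij_U B.bij_R B.bij_U] by blast
  then obtain y j a' where h: "t x = y + m * j" "y < m" "j < e" "int e * a = int e * a' + int j - int 0"
    using B.walk_project[of "t c1" "t x" _ _ "t c1" 0] tc1 A.e unfolding B.over_walk_def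
      by fastforce
  have "int e dvd int j" using h(4)
    by (metis add_diff_cancel_left' diff_zero dvd_diff dvd_triv_left of_nat_0)
  then have "j = 0" using h(3) by (metis int_dvd_int_iff nat_dvd_not_less neq0_conv)
  then show ?thesis using h by simp
qed

lemma conjugates_unstretch:
  assumes "stretch_data m e r1 u1" "stretch_data m e r2 u2" "(r1,u1) \<in> sts m" "inH2 m (r1,u1)"
    and "conjugates t (m * e) (stretch m e (r1,u1)) (stretch m e (r2,u2))"
  shows "\<exists>s. conjugates s m (r1,u1) (r2,u2)"
proof -
  interpret A: stretch_data m e r1 u1 by fact
  interpret B: stretch_data m e r2 u2 by fact
  have tp: "t permutes {..<m * e}" and tr: "\<And>x. t (A.R x) = B.R (t x)" and tu: "\<And>x. t (A.U x) = B.U (t x)"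
    using assms(5) unfolding conjugates_def stretch_def by auto
  note tl = conjugates_stretch_copy0[OF assms]
  define s where "s k = (if k < m then t k else k)" for k
  have "inj_on s {..<m}"
  proof (rule inj_onI)
    fix a b assume "a \<in> {..<m}" "b \<in> {..<m}" "s a = s b"
    then show "a = b" using permutes_inj[OF tp] unfolding s_def by (simp add: inj_eq)
  qed
  then have sp: "s permutes {..<m}" by (rule permutes_lessThan_if_inj_on) (auto simp: s_def tl)
  have "s (r1 x) = r2 (s x) \<and> s (u1 x) = u2 (s x)" for x
  proof (cases "x < m")
    case True
    have "t ((A.R ^^ e) x) = (B.R ^^ e) (t x)" using funpow_commute[of t A.R B.R, OF tr] .
    then have "t (r1 x) = r2 (t x)" using A.R_funpow_e[OF True] B.R_funpow_e[OF tl[OF True]] by simp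
    moreover have "t (u1 x) = u2 (t x)" using tu[of x] A.U_base[OF True] B.U_base[OF tl[OF True]]
      by simp
    ultimately show ?thesis using True tl A.r_less A.u_less unfolding s_def by simp
  next
    case False
    then have "r1 x = x" "u1 x = x" "r2 x = x" "u2 x = x" using A.rp A.up B.rp B.up
      by (auto simp: permutes_def)
    then show ?thesis using False unfolding s_def by simp
  qed
  then show ?thesis unfolding conjugates_def using sp by auto
qed

section \<open>Surfaces with horizontally divisible periods\<close>

locale horizontally_divisible =
  fixes n e :: nat and r u :: "nat \<Rightarrow> nat" and c0 :: nat
  assumes surface: "(r,u) \<in> sts n" and in_H2: "inH2 n (r,u)" and e: "e > 0"
    and periods_dvd: "\<And>A B. (A,B) \<in> periods n (r,u) \<Longrightarrow> int e dvd A"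
    and c0_less: "c0 < n" and c0_cone: "comm r u c0 \<noteq> c0"
begin

lemma rp: "r permutes {..<n}" and up: "u permutes {..<n}" using sts_permutes[OF surface] by auto
lemma bij_r: "bij r" and bij_u: "bij u" using sts_bij[OF surface] by auto

lemma periods_loops: "periods n (r,u) = {(a,b). walk r u c0 c0 a b}"
  by (rule periods_eq_loops[OF surface in_H2 c0_less c0_cone])

lemmas r_less = permutes_lessThan_less[OF rp] and u_less = permutes_lessThan_less[OF up]
  and r_funpow_less = permutes_lessThan_funpow_less[OF rp]
  and r_inv_funpow_less = permutes_lessThan_funpow_less[OF permutes_inv[OF rp]]

text \<open>The level of a square is the horizontal holonomy of a walk from the cone point to it,
  taken mod \<open>e\<close>; it is well defined because two such walks differ by a period.\<close>
definition level :: "nat \<Rightarrow> int" where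
  "level y = (SOME A. \<exists>B. walk r u c0 y A B) mod int e"

lemma level_eq:
  assumes "walk r u c0 y A B"
  shows "level y = A mod int e"
proof -
  let ?A = "SOME A. \<exists>B. walk r u c0 y A B"
  have "\<exists>B. walk r u c0 y ?A B" using someI_ex[of "\<lambda>A. \<exists>B. walk r u c0 y A B"] assms by blast
  then obtain B' where B': "walk r u c0 y ?A B'" by blast
  have "walk r u c0 c0 (A + - ?A) (B + - B')"
    by (rule walk_trans[OF walk_reverse[OF bij_r bij_u B'] assms])
  then have "(A + - ?A, B + - B') \<in> periods n (r,u)" using periods_loops by simp
  then have "int e dvd A - ?A" using periods_dvd by simp
  then have "A mod int e = ?A mod int e" by (simp add: mod_eq_dvd_iff)
  then show ?thesis unfolding level_def by simp
qed

lemma walk_from_c0: "y < n \<Longrightarrow> \<exists>A B. walk r u c0 y A B" using sts_walk[OF surface c0_less] by blast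

lemma level_cone_point: "c < n \<Longrightarrow> comm r u c \<noteq> c \<Longrightarrow> level c = 0"
  using level_eq[OF walk_cone_points[OF surface in_H2 c0_less c0_cone]] by simp

definition base :: "nat set" where "base = {y. y < n \<and> level y = 0}"

lemma finite_base: "finite base" unfolding base_def by auto

lemma level_funpow_right:
  assumes "y \<in> base" "j < e"
  shows "level ((r ^^ j) y) = int j"
proof -
  have "y < n" using assms base_def by simp
  then obtain A B where w: "walk r u c0 y A B" using walk_from_c0 by blast
  have A0: "A mod int e = 0" using level_eq[OF w] assms base_def by simp
  have "walk r u c0 ((r ^^ j) y) (A + int j) (B + 0)" by (rule walk_trans[OF walk_funpow_right w])
  then have "level ((r ^^ j) y) = (A + int j) mod int e" using level_eq by simp
  also have "\<dots> = (A mod int e + int j) mod int e" by (simp add: mod_add_left_eq)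
  also have "\<dots> = int j" using A0 assms(2) by simp
  finally show ?thesis .
qed

lemma bij_betw_base_copies: "bij_betw (\<lambda>(y,j). (r ^^ j) y) (base \<times> {..<e}) {..<n}"
proof (rule bij_betw_imageI)
  show "inj_on (\<lambda>(y,j). (r ^^ j) y) (base \<times> {..<e})"
  proof (rule inj_onI)
    fix p q assume pq: "p \<in> base \<times> {..<e}" "q \<in> base \<times> {..<e}" "(\<lambda>(y,j). (r ^^ j) y) p = (\<lambda>(y,j). (r ^^ j) y) q"
    obtain y j y' j' where yj: "p = (y,j)" "q = (y',j')" by (cases p, cases q)
    have a: "y \<in> base" "j < e" "y' \<in> base" "j' < e" "(r ^^ j) y = (r ^^ j') y'" using pq yj by auto
    have "int j = int j'" using level_funpow_right[of y j] level_funpow_right[of y' j'] a by simp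
    then have "j = j'" by simp
    moreover then have "y = y'" using a(5) bij_fn[OF bij_r, of j] by (simp add: bij_is_inj inj_eq)
    ultimately show "p = q" using yj by simp
  qed
  show "(\<lambda>(y,j). (r ^^ j) y) ` (base \<times> {..<e}) = {..<n}"
  proof
    show "(\<lambda>(y,j). (r ^^ j) y) ` (base \<times> {..<e}) \<subseteq> {..<n}" using r_funpow_less base_def by auto
    show "{..<n} \<subseteq> (\<lambda>(y,j). (r ^^ j) y) ` (base \<times> {..<e})"
    proof
      fix z assume "z \<in> {..<n}"
      then have z: "z < n" by simp
      obtain A B where w: "walk r u c0 z A B" using walk_from_c0[OF z] by blast
      define j where "j = nat (A mod int e)"
      have ij: "int j = A mod int e" unfolding j_def using e by simp
      have jl: "j < e" unfolding j_def using e by (simp add: nat_less_iff)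
      define y where "y = (inv r ^^ j) z"
      have "walk r u c0 y (A + - int j) (B + 0)" unfolding y_def
        by (rule walk_trans[OF walk_funpow_left w])
      then have "level y = (A - int j) mod int e" using level_eq by simp
      also have "\<dots> = 0" using ij by (simp add: mod_diff_left_eq[symmetric])
      finally have "y \<in> base" unfolding base_def y_def using r_inv_funpow_less[OF z] by simp
      moreover have "(r ^^ j) y = z" unfolding y_def using bij_funpow_inv_cancel(2)[OF bij_r]
        by simp
      ultimately show "z \<in> (\<lambda>(y,j). (r ^^ j) y) ` (base \<times> {..<e})" using jl by force
    qed
  qed
qed

definition m :: nat where "m = card base"

lemma n_eq_m_mult_e: "n = m * e"
proof -
  have "card {..<n} = card (base \<times> {..<e})" using bij_betw_same_card[OF bij_betw_base_copies]
    by simp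
  then show ?thesis unfolding m_def by (simp add: card_cartesian_product)
qed

lemma m_pos: "m > 0" using n_eq_m_mult_e c0_less by (cases m) auto

definition base_enum :: "nat \<Rightarrow> nat" where "base_enum = (SOME h. bij_betw h {..<m} base)"

lemma bij_betw_base_enum: "bij_betw base_enum {..<m} base"
proof -
  have "\<exists>h. bij_betw h {..<m} base" using ex_bij_betw_nat_finite[OF finite_base] unfolding m_def
    by (simp add: atLeast0LessThan)
  then show ?thesis unfolding base_enum_def by (rule someI_ex)
qed

lemma base_enum_in: "x < m \<Longrightarrow> base_enum x \<in> base" using bij_betw_base_enum bij_betwE by blast

lemma base_funpow_e_right: "y \<in> base \<Longrightarrow> (r ^^ e) y \<in> base"
proof -
  assume y: "y \<in> base"
  have "y < n" using y base_def by simp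
  then obtain A B where w: "walk r u c0 y A B" using walk_from_c0 by blast
  have A0: "A mod int e = 0" using level_eq[OF w] y base_def by simp
  have "walk r u c0 ((r ^^ e) y) (A + int e) (B + 0)" by (rule walk_trans[OF walk_funpow_right w])
  then have "level ((r ^^ e) y) = (A + int e) mod int e" using level_eq by simp
  also have "\<dots> = 0" using A0 by simp
  finally show ?thesis using r_funpow_less y base_def by simp
qed

lemma base_up: "y \<in> base \<Longrightarrow> u y \<in> base"
proof -
  assume y: "y \<in> base"
  have "y < n" using y base_def by simp
  then obtain A B where w: "walk r u c0 y A B" using walk_from_c0 by blast
  have "walk r u c0 (u y) A (B + 1)" using walk_up[OF w] .
  then have "level (u y) = level y" using level_eq[OF w] level_eq by simp
  then show ?thesis using u_less y base_def by simp
qed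

definition base_r :: "nat \<Rightarrow> nat" where
  "base_r x = (if x < m then inv_into {..<m} base_enum ((r ^^ e) (base_enum x)) else x)"
definition base_u :: "nat \<Rightarrow> nat" where
  "base_u x = (if x < m then inv_into {..<m} base_enum (u (base_enum x)) else x)"

lemma base_enum_image: "base_enum ` {..<m} = base" using bij_betw_base_enum bij_betw_imp_surj_on
  by blast
lemma inj_on_base_enum: "inj_on base_enum {..<m}" using bij_betw_base_enum bij_betw_imp_inj_on
  by blast

lemma base_r_spec: "x < m \<Longrightarrow> base_r x < m \<and> base_enum (base_r x) = (r ^^ e) (base_enum x)"
proof -
  assume x: "x < m"
  have h: "(r ^^ e) (base_enum x) \<in> base_enum ` {..<m}"
    using base_funpow_e_right base_enum_in x base_enum_image by simp
  show ?thesis unfolding base_r_def using x inv_into_into[OF h] f_inv_into_f[OF h] by simp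
qed

lemma base_u_spec: "x < m \<Longrightarrow> base_u x < m \<and> base_enum (base_u x) = u (base_enum x)"
proof -
  assume x: "x < m"
  have h: "u (base_enum x) \<in> base_enum ` {..<m}" using base_up base_enum_in x base_enum_image
    by simp
  show ?thesis unfolding base_u_def using x inv_into_into[OF h] f_inv_into_f[OF h] by simp
qed

lemma base_r_permutes: "base_r permutes {..<m}"
proof (rule permutes_lessThan_if_inj_on)
  show "inj_on base_r {..<m}"
  proof (rule inj_onI)
    fix a b assume a: "a \<in> {..<m}" "b \<in> {..<m}" "base_r a = base_r b"
    then have "(r ^^ e) (base_enum a) = (r ^^ e) (base_enum b)" using base_r_spec
      by (metis lessThan_iff)
    then have "base_enum a = base_enum b" using bij_fn[OF bij_r, of e]
      by (simp add: bij_is_inj inj_eq)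
    then show "a = b" using inj_on_base_enum a by (meson inj_onD)
  qed
  show "\<And>k. k < m \<Longrightarrow> base_r k < m" using base_r_spec by blast
  show "\<And>k. \<not> k < m \<Longrightarrow> base_r k = k" unfolding base_r_def by simp
qed

lemma base_u_permutes: "base_u permutes {..<m}"
proof (rule permutes_lessThan_if_inj_on)
  show "inj_on base_u {..<m}"
  proof (rule inj_onI)
    fix a b assume a: "a \<in> {..<m}" "b \<in> {..<m}" "base_u a = base_u b"
    then have "u (base_enum a) = u (base_enum b)" using base_u_spec by (metis lessThan_iff)
    then have "base_enum a = base_enum b" using bij_u by (simp add: bij_is_inj inj_eq)
    then show "a = b" using inj_on_base_enum a by (meson inj_onD)
  qed
  show "\<And>k. k < m \<Longrightarrow> base_u k < m" using base_u_spec by blast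
  show "\<And>k. \<not> k < m \<Longrightarrow> base_u k = k" unfolding base_u_def by simp
qed

lemma base_stretch_data: "stretch_data m e base_r base_u"
  using m_pos e base_r_permutes base_u_permutes by unfold_locales

text \<open>Squares of nonzero level are not cone points, so there \<open>r\<close> and \<open>u\<close> commute.\<close>
lemma right_up_commute:
  assumes z: "z < n" and p: "level (r (u z)) \<noteq> 0"
  shows "r (u z) = u (r z)"
proof -
  have c: "comm r u (r (u z)) = u (r z)" by (rule comm_right_up[OF bij_r bij_u])
  have "r (u z) < n" using z u_less r_less by blast
  then have "comm r u (r (u z)) = r (u z)" using level_cone_point p by blast
  then show ?thesis using c by simp
qed

lemma funpow_right_up_commute:
  assumes y: "y \<in> base"
  shows "i < e \<Longrightarrow> (r ^^ i) (u y) = u ((r ^^ i) y)"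
proof (induction i)
  case 0 then show ?case by simp
next
  case (Suc i)
  have "y < n" using y base_def by simp
  then obtain A B where w: "walk r u c0 y A B" using walk_from_c0 by blast
  have A0: "A mod int e = 0" using level_eq[OF w] y base_def by simp
  let ?z = "(r ^^ i) y"
  have "walk r u c0 ?z (A + int i) (B + 0)" by (rule walk_trans[OF walk_funpow_right w])
  then have "walk r u c0 (r (u ?z)) (A + int i + 1) (B + 0 + 1)" by (intro walk_right walk_up)
  then have "level (r (u ?z)) = (A + int i + 1) mod int e" using level_eq by simp
  also have "\<dots> = (A mod int e + (int i + 1)) mod int e" by (simp add: mod_add_left_eq add.assoc)
  also have "\<dots> = int i + 1" using A0 Suc.prems by simp
  finally have "level (r (u ?z)) \<noteq> 0" by simp
  then have "r (u ?z) = u (r ?z)" using right_up_commute r_funpow_less y base_def by simp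
  moreover have "(r ^^ i) (u y) = u ?z" using Suc by simp
  ultimately show ?case by simp
qed

lemma copy_cases_n:
  assumes "k < n"
  obtains x i where "k = x + m * i" "x < m" "i < e"
proof -
  have "k < m * e" using assms n_eq_m_mult_e by simp
  then show ?thesis using that by (rule copy_cases)
qed

definition relabel :: "nat \<Rightarrow> nat" where
  "relabel k = (if k < n then (r ^^ (k div m)) (base_enum (k mod m)) else k)"

lemma relabel_copy: "x < m \<Longrightarrow> i < e \<Longrightarrow> relabel (x + m * i) = (r ^^ i) (base_enum x)"
  unfolding relabel_def using copy_less[of x m i e] n_eq_m_mult_e by simp

lemma relabel_permutes: "relabel permutes {..<n}"
proof (rule permutes_lessThan_if_inj_on)
  show "inj_on relabel {..<n}"
  proof (rule inj_onI)
    fix k1 k2 assume k: "k1 \<in> {..<n}" "k2 \<in> {..<n}" "relabel k1 = relabel k2"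
    obtain x1 i1 where a: "k1 = x1 + m * i1" "x1 < m" "i1 < e" using k(1)
      by (auto elim: copy_cases_n)
    obtain x2 i2 where b: "k2 = x2 + m * i2" "x2 < m" "i2 < e" using k(2)
      by (auto elim: copy_cases_n)
    have "(r ^^ i1) (base_enum x1) = (r ^^ i2) (base_enum x2)" using k(3) a b relabel_copy by simp
    moreover have "(base_enum x1, i1) \<in> base \<times> {..<e}" "(base_enum x2, i2) \<in> base \<times> {..<e}"
      using a b base_enum_in by auto
    ultimately have "(base_enum x1, i1) = (base_enum x2, i2)"
      using inj_onD[OF bij_betw_imp_inj_on[OF bij_betw_base_copies],
          of "(base_enum x1, i1)" "(base_enum x2, i2)"] by auto
    then have "x1 = x2" "i1 = i2" using inj_on_base_enum a b by (auto dest: inj_onD)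
    then show "k1 = k2" using a b by simp
  qed
  show "k < n \<Longrightarrow> relabel k < n" for k
  proof -
    assume k: "k < n"
    then obtain x i where a: "k = x + m * i" "x < m" "i < e" by (rule copy_cases_n)
    then show ?thesis using relabel_copy r_funpow_less base_enum_in base_def by auto
  qed
  show "\<not> k < n \<Longrightarrow> relabel k = k" for k unfolding relabel_def by simp
qed

lemma conjugates_stretch_base: "conjugates relabel n (stretch m e (base_r,base_u)) (r,u)"
proof -
  interpret T: stretch_data m e base_r base_u by (rule base_stretch_data)
  have "relabel (T.R k) = r (relabel k) \<and> relabel (T.U k) = u (relabel k)" for k
  proof (cases "k < n")
    case False
    then have "T.R k = k" "T.U k = k" using T.R_outside T.U_outside n_eq_m_mult_e by auto
    moreover have "r k = k" "u k = k" using False rp up by (auto simp: permutes_def)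
    ultimately show ?thesis using False unfolding relabel_def by simp
  next
    case True
    then obtain x i where a: "k = x + m * i" "x < m" "i < e" by (rule copy_cases_n)
    have 1: "relabel (T.R k) = r (relabel k)"
    proof (cases "i + 1 < e")
      case True
      then have "T.R k = x + m * (i + 1)" using T.R_copy a by simp
      then have "relabel (T.R k) = (r ^^ (i + 1)) (base_enum x)" using relabel_copy[OF a(2) True]
        by simp
      then show ?thesis using relabel_copy[OF a(2,3)] a by simp
    next
      case False
      then have ie: "i = e - 1" using a by simp
      have "T.R k = base_r x + m * 0" using T.R_copy a False by simp
      then have "relabel (T.R k) = base_enum (base_r x)"
        using relabel_copy[OF conjunct1[OF base_r_spec[OF a(2)]], of 0] e by simp
      also have "\<dots> = (r ^^ e) (base_enum x)" using base_r_spec[OF a(2)] by simp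
      also have "\<dots> = r ((r ^^ (e - 1)) (base_enum x))"
      proof -
        obtain e' where "e = Suc e'" using e by (cases e) auto
        then show ?thesis by simp
      qed
      also have "\<dots> = r (relabel k)" using relabel_copy[OF a(2,3)] a ie by simp
      finally show ?thesis .
    qed
    have "T.U k = base_u x + m * i" using T.U_copy a by simp
    then have "relabel (T.U k) = (r ^^ i) (base_enum (base_u x))"
      using relabel_copy[OF conjunct1[OF base_u_spec[OF a(2)]] a(3)] by simp
    also have "\<dots> = (r ^^ i) (u (base_enum x))" using base_u_spec[OF a(2)] by simp
    also have "\<dots> = u ((r ^^ i) (base_enum x))"
      using funpow_right_up_commute[OF base_enum_in[OF a(2)] a(3)] .
    also have "\<dots> = u (relabel k)" using relabel_copy[OF a(2,3)] a by simp
    finally show ?thesis using 1 by simp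
  qed
  then show ?thesis unfolding conjugates_def stretch_def using relabel_permutes by simp
qed

end

lemma horizontally_divisible_is_stretch:
  assumes "(r,u) \<in> sts n" "inH2 n (r,u)" "e > 0" "\<And>A B. (A,B) \<in> periods n (r,u) \<Longrightarrow> int e dvd A"
  obtains m r' u' s where "n = m * e" "stretch_data m e r' u'" "conjugates s n (stretch m e (r',u')) (r,u)"
proof -
  obtain c0 where "c0 < n" "comm r u c0 \<noteq> c0" using cone_point_exists[OF assms(2)] by blast
  then interpret horizontally_divisible n e r u c0 using assms by unfold_locales
  show ?thesis using that n_eq_m_mult_e base_stretch_data conjugates_stretch_base by blast
qed

lemma stretch_with_periods:
  assumes "m > 0" "e > 0" "p \<in> with_periods m L"
  shows "stretch m e p \<in> with_periods (m * e) (scale_lattice e L)"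
proof -
  obtain r u where p: "p = (r,u)" by (cases p)
  have s: "(r,u) \<in> sts m" "inH2 m (r,u)" "periods m (r,u) = L" using assms(3) p with_periods_def
    by auto
  interpret A: stretch_data m e r u using assms(1,2) sts_permutes[OF s(1)] by unfold_locales
  show ?thesis unfolding p stretch_def with_periods_def
    using A.sts_stretch[OF s(1)] A.inH2_stretch s A.periods_stretch[OF s(1)] by simp
qed

lemma sts_stretch_data: "m > 0 \<Longrightarrow> e > 0 \<Longrightarrow> (r,u) \<in> sts m \<Longrightarrow> stretch_data m e r u"
  using sts_permutes by unfold_locales

lemma sts_iso_stretch_iff:
  assumes "m > 0" "e > 0" "p1 \<in> with_periods m L" "p2 \<in> with_periods m L"
  shows "(stretch m e p1, stretch m e p2) \<in> sts_iso (m * e) \<longleftrightarrow> (p1,p2) \<in> sts_iso m"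
proof -
  obtain r1 u1 r2 u2 where p: "p1 = (r1,u1)" "p2 = (r2,u2)" by (cases p1, cases p2)
  have s: "(r1,u1) \<in> sts m" "(r2,u2) \<in> sts m" "inH2 m (r1,u1)" using assms p with_periods_def
    by auto
  note d = sts_stretch_data[OF assms(1,2) s(1)] sts_stretch_data[OF assms(1,2) s(2)]
  have "stretch m e p1 \<in> sts (m * e)" "stretch m e p2 \<in> sts (m * e)"
    using stretch_with_periods[OF assms(1,2)] assms(3,4) with_periods_def by auto
  then show ?thesis
    using conjugates_stretch[OF d] conjugates_unstretch[OF d s(1,3)] s p sts_iso_iff by blast
qed

lemma unstretch_with_periods:
  assumes m: "m > 0" and e: "e > 0" and q: "q \<in> with_periods (m * e) (scale_lattice e L)"
  shows "\<exists>p\<in>with_periods m L. (stretch m e p, q) \<in> sts_iso (m * e)"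
proof -
  obtain r u where qq: "q = (r,u)" by (cases q)
  have qs: "(r,u) \<in> sts (m * e)" "inH2 (m * e) (r,u)" "periods (m * e) (r,u) = scale_lattice e L"
    using q qq with_periods_def by auto
  have "\<And>A B. (A,B) \<in> periods (m * e) (r,u) \<Longrightarrow> int e dvd A" using qs(3) scale_lattice_def by auto
  then obtain m2 r' u' s where h: "m * e = m2 * e" "stretch_data m2 e r' u'"
      "conjugates s (m * e) (stretch m2 e (r',u')) (r,u)"
    using horizontally_divisible_is_stretch[OF qs(1,2) e] by metis
  have "m2 = m" using h(1) e by simp
  with h interpret T: stretch_data m e r' u' by simp
  have c: "conjugates s (m * e) (T.R, T.U) (r,u)" using h(3) \<open>m2 = m\<close> unfolding stretch_def by simp
  have Hs: "(T.R, T.U) \<in> sts (m * e)"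
    by (rule sts_conjugates[OF conjugates_inv[OF c] qs(1) T.R_permutes T.U_permutes])
  have iso: "((T.R, T.U), (r,u)) \<in> sts_iso (m * e)" using Hs qs(1) c sts_iso_iff by blast
  have s': "(r',u') \<in> sts m" by (rule T.sts_unstretch[OF Hs])
  have "inH2 m (r',u')" using sts_iso_inH2[OF iso] qs(2) T.inH2_stretch by simp
  moreover have "periods m (r',u') = L"
  proof (rule scale_lattice_inj[OF e])
    have "scale_lattice e (periods m (r',u')) = periods (m * e) (T.R, T.U)"
      using T.periods_stretch[OF s'] by simp
    also have "\<dots> = scale_lattice e L" using sts_iso_periods[OF iso] qs(3) by simp
    finally show "scale_lattice e (periods m (r',u')) = scale_lattice e L" .
  qed
  ultimately have "(r',u') \<in> with_periods m L" using s' with_periods_def by simp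
  moreover have "(stretch m e (r',u'), q) \<in> sts_iso (m * e)" using iso qq unfolding stretch_def
    by simp
  ultimately show ?thesis by blast
qed

lemma card_period_classes_stretch:
  assumes "m > 0" "e > 0"
  shows "card (period_classes m L) = card (period_classes (m * e) (scale_lattice e L))"
  by (rule card_period_classes_eq[where F = "stretch m e"])
     (simp_all add: assms stretch_with_periods sts_iso_stretch_iff unstretch_with_periods)

lemma dvd_of_horizontally_divisible:
  assumes "(r,u) \<in> sts n" "inH2 n (r,u)" "e > 0" "\<And>A B. (A,B) \<in> periods n (r,u) \<Longrightarrow> int e dvd A"
  shows "e dvd n"
proof -
  obtain m where "n = m * e"
    using horizontally_divisible_is_stretch[OF assms(1-3)] assms(4) by blast
  then show ?thesis by simp
qed

section \<open>Sublattices of finite index\<close>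

lemma sublattice_add: "sublattice L \<Longrightarrow> (x,y) \<in> L \<Longrightarrow> (x',y') \<in> L \<Longrightarrow> (x + x', y + y') \<in> L"
  unfolding sublattice_def by fastforce

lemma sublattice_neg: "sublattice L \<Longrightarrow> (x,y) \<in> L \<Longrightarrow> (- x, - y) \<in> L"
  unfolding sublattice_def by fastforce

lemma sublattice_smult_nat:
  assumes "sublattice L" "(x,y) \<in> L"
  shows "(int k * x, int k * y) \<in> L"
proof (induction k)
  case 0 then show ?case using assms(1) sublattice_def by simp
next
  case (Suc k)
  then have "(fst (int k * x, int k * y) + fst (x,y), snd (int k * x, int k * y) + snd (x,y)) \<in> L"
    using assms sublattice_def by blast
  then show ?case by (simp add: algebra_simps)
qed

lemma sublattice_smult:
  assumes "sublattice L" "(x,y) \<in> L"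
  shows "(k * x, k * y) \<in> L"
proof (cases "k \<ge> 0")
  case True
  then show ?thesis using sublattice_smult_nat[OF assms, of "nat k"] by simp
next
  case False
  have "(int (nat (-k)) * x, int (nat (-k)) * y) \<in> L" using sublattice_smult_nat[OF assms] by blast
  then have "(- (int (nat (-k)) * x), - (int (nat (-k)) * y)) \<in> L" using assms(1) sublattice_def
    by fastforce
  then show ?thesis using False by simp
qed

lemma sublattice_lincomb:
  "sublattice L \<Longrightarrow> (x,y) \<in> L \<Longrightarrow> (x',y') \<in> L \<Longrightarrow> (k * x + k' * x', k * y + k' * y') \<in> L"
  using sublattice_add sublattice_smult by blast

lemma coset_eq_iff:
  assumes "sublattice L"
  shows "coset p L = coset q L \<longleftrightarrow> (fst p - fst q, snd p - snd q) \<in> L"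
proof
  assume e: "coset p L = coset q L"
  have "(0,0) \<in> L" using assms by (simp add: sublattice_def)
  then have "p \<in> coset p L" unfolding coset_def by (intro CollectI exI[of _ "(0,0)"]) simp
  then have "p \<in> coset q L" using e by simp
  then obtain l where "l \<in> L" "p = (fst q + fst l, snd q + snd l)" unfolding coset_def by auto
  then show "(fst p - fst q, snd p - snd q) \<in> L" by simp
next
  assume d: "(fst p - fst q, snd p - snd q) \<in> L"
  have sub: "coset p L \<subseteq> coset q L" if "(fst p - fst q, snd p - snd q) \<in> L" for p q
  proof
    fix z assume "z \<in> coset p L"
    then obtain l where l: "l \<in> L" "z = (fst p + fst l, snd p + snd l)" unfolding coset_def by auto
    have "(fst p - fst q + fst l, snd p - snd q + snd l) \<in> L"
      using sublattice_add[OF assms that, of "fst l" "snd l"] l by simp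
    then show "z \<in> coset q L" unfolding coset_def using l
      by (intro CollectI exI[of _ "(fst p - fst q + fst l, snd p - snd q + snd l)"]) simp
  qed
  have "(fst q - fst p, snd q - snd p) \<in> L" using sublattice_neg[OF assms d] by simp
  then show "coset p L = coset q L" using sub d by blast
qed

text \<open>The Hermite normal form lattice generated by \<open>(a, 0)\<close> and \<open>(b, c)\<close>.\<close>
definition hnf_lattice :: "nat \<Rightarrow> nat \<Rightarrow> nat \<Rightarrow> (int \<times> int) set" where
  "hnf_lattice a b c = {(x,y). int c dvd y \<and> int a dvd x - int b * (y div int c)}"

lemma sublattice_hnf_lattice: "sublattice (hnf_lattice a b c)"
proof -
  have 1: "(x + x', y + y') \<in> hnf_lattice a b c" if "(x,y) \<in> hnf_lattice a b c" "(x',y') \<in> hnf_lattice a b c" for x y x' y'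
  proof -
    have h: "int c dvd y" "int a dvd x - int b * (y div int c)" "int c dvd y'" "int a dvd x' - int b * (y' div int c)"
      using that unfolding hnf_lattice_def by auto
    have "(y + y') div int c = y div int c + y' div int c" using h(1,3) by simp
    then have eq: "x + x' - int b * ((y + y') div int c) = (x - int b * (y div int c)) + (x' - int b * (y' div int c))"
      by (simp add: algebra_simps)
    have "int a dvd x + x' - int b * ((y + y') div int c)" unfolding eq
      by (rule dvd_add[OF h(2) h(4)])
    moreover have "int c dvd y + y'" by (rule dvd_add[OF h(1) h(3)])
    ultimately show ?thesis unfolding hnf_lattice_def by simp
  qed
  have 2: "(- x, - y) \<in> hnf_lattice a b c" if "(x,y) \<in> hnf_lattice a b c" for x y
  proof -
    have h: "int c dvd y" "int a dvd x - int b * (y div int c)" using that unfolding hnf_lattice_def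
      by auto
    have "(- y) div int c = - (y div int c)" using h(1) by (simp add: div_minus_right dvd_neg_div)
    then have eq: "- x - int b * ((- y) div int c) = - (x - int b * (y div int c))"
      by (simp add: algebra_simps)
    have "int a dvd - x - int b * ((- y) div int c)" unfolding eq using h(2)
      by (simp only: dvd_minus_iff)
    moreover have "int c dvd - y" using h(1) by simp
    ultimately show ?thesis unfolding hnf_lattice_def by simp
  qed
  show ?thesis unfolding sublattice_def using 1 2 by (auto simp: hnf_lattice_def)
qed

lemma eq_if_dvd_diff_less:
  fixes k p q :: int
  assumes "k > 0" "0 \<le> p" "p < k" "0 \<le> q" "q < k" "k dvd p - q"
  shows "p = q"
proof -
  obtain t where t: "p - q = k * t" using assms(6) by auto
  have "t = 0"
  proof (rule ccontr)
    assume "t \<noteq> 0"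
    then have "1 \<le> \<bar>t\<bar>" by simp
    then have "k * 1 \<le> k * \<bar>t\<bar>" using assms(1) by (intro mult_left_mono) auto
    moreover have "\<bar>k * t\<bar> = k * \<bar>t\<bar>" using assms(1) by (simp add: abs_mult)
    ultimately have "k \<le> \<bar>p - q\<bar>" using t by simp
    then show False using assms(2-5) by linarith
  qed
  then show ?thesis using t by simp
qed

lemma card_cosets_hnf_lattice:
  assumes "a > 0" "c > 0"
  shows "card (range (\<lambda>x. coset x (hnf_lattice a b c))) = a * c"
proof -
  let ?L = "hnf_lattice a b c"
  have sl: "sublattice ?L" by (rule sublattice_hnf_lattice)
  let ?B = "{0..<int a} \<times> {0..<int c}"
  have img: "range (\<lambda>x. coset x ?L) = (\<lambda>x. coset x ?L) ` ?B"
  proof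
    show "(\<lambda>x. coset x ?L) ` ?B \<subseteq> range (\<lambda>x. coset x ?L)" by auto
    show "range (\<lambda>x. coset x ?L) \<subseteq> (\<lambda>x. coset x ?L) ` ?B"
    proof
      fix C assume "C \<in> range (\<lambda>x. coset x ?L)"
      then obtain x y where C: "C = coset (x,y) ?L" by auto
      define q where "q = y mod int c"
      define t where "t = y div int c"
      define p where "p = (x - int b * t) mod int a"
      have "(x - p, y - q) \<in> ?L"
      proof -
        have "y - q = int c * t" unfolding q_def t_def by (simp add: minus_mod_eq_mult_div)
        then have "(y - q) div int c = t" using assms by simp
        moreover have "int a dvd (x - int b * t) - p" unfolding p_def
          by (simp add: mod_0_imp_dvd minus_mod_eq_mult_div[symmetric])
        ultimately show ?thesis unfolding hnf_lattice_def using \<open>y - q = int c * t\<close>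
          by (simp add: algebra_simps)
      qed
      then have "coset (x,y) ?L = coset (p,q) ?L" using coset_eq_iff[OF sl] by simp
      moreover have "(p,q) \<in> ?B" unfolding p_def q_def using assms by simp
      ultimately show "C \<in> (\<lambda>x. coset x ?L) ` ?B" using C by blast
    qed
  qed
  have inj: "inj_on (\<lambda>x. coset x ?L) ?B"
  proof (rule inj_onI)
    fix u v assume uv: "u \<in> ?B" "v \<in> ?B" "coset u ?L = coset v ?L"
    obtain p q p' q' where pq: "u = (p,q)" "v = (p',q')" by (cases u, cases v)
    have h: "(p - p', q - q') \<in> ?L" using coset_eq_iff[OF sl] uv pq by simp
    have b: "0 \<le> p" "p < int a" "0 \<le> q" "q < int c" "0 \<le> p'" "p' < int a" "0 \<le> q'" "q' < int c"
      using uv pq by auto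
    have "int c dvd q - q'" using h hnf_lattice_def by simp
    then have "q = q'" using b eq_if_dvd_diff_less[of "int c" q q'] assms by simp
    then have "int a dvd p - p'" using h hnf_lattice_def by simp
    then have "p = p'" using b eq_if_dvd_diff_less[of "int a" p p'] assms by simp
    then show "u = v" using pq \<open>q = q'\<close> by simp
  qed
  have "card (range (\<lambda>x. coset x ?L)) = card ?B" using img card_image[OF inj] by simp
  also have "\<dots> = a * c" by (simp add: card_cartesian_product)
  finally show ?thesis .
qed


lemma hnf_lattice_in_Lambda: "a > 0 \<Longrightarrow> c > 0 \<Longrightarrow> hnf_lattice a b c \<in> Lambda (a * c)"
  unfolding Lambda_def using sublattice_hnf_lattice card_cosets_hnf_lattice by simp

lemma sublattice_eq_hnf_lattice:
  assumes L: "sublattice L" and a: "(int a, 0) \<in> L" and bc: "(int b, int c) \<in> L" and c: "c > 0"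
    and cdvd: "\<And>x y. (x,y) \<in> L \<Longrightarrow> int c dvd y" and advd: "\<And>x. (x,0) \<in> L \<Longrightarrow> int a dvd x"
  shows "L = hnf_lattice a b c"
proof (rule set_eqI, clarify)
  fix x y
  show "(x,y) \<in> L \<longleftrightarrow> (x,y) \<in> hnf_lattice a b c"
  proof
    assume xy: "(x,y) \<in> L"
    let ?t = "y div int c"
    have "(1 * x + (- ?t) * int b, 1 * y + (- ?t) * int c) \<in> L"
      by (rule sublattice_lincomb[OF L xy bc])
    moreover have "1 * y + (- ?t) * int c = 0" using cdvd[OF xy] by simp
    ultimately have "(x - int b * ?t, 0) \<in> L" by (simp add: algebra_simps)
    then show "(x,y) \<in> hnf_lattice a b c" unfolding hnf_lattice_def using cdvd[OF xy] advd by simp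
  next
    assume "(x,y) \<in> hnf_lattice a b c"
    then obtain s where h: "int c dvd y" "x - int b * (y div int c) = int a * s"
      unfolding hnf_lattice_def by auto
    have "(s * int a + (y div int c) * int b, s * 0 + (y div int c) * int c) \<in> L"
      by (rule sublattice_lincomb[OF L a bc])
    then show "(x,y) \<in> L" using h by (simp add: algebra_simps)
  qed
qed

text \<open>Take \<open>c\<close> the least positive second coordinate of a vector \<open>(b, c)\<close> of \<open>L\<close>, reduced
  modulo the least positive \<open>a\<close> with \<open>(a, 0) \<in> L\<close>; division with remainder and minimality
  give the divisibility hypotheses of \<open>sublattice_eq_hnf_lattice\<close>.\<close>
lemma sublattice_hnf_exists:
  assumes L: "sublattice L" and k1: "(k1, 0) \<in> L" "k1 > 0" and k2: "(0, k2) \<in> L" "k2 > 0"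
  shows "\<exists>a b c. a > 0 \<and> c > 0 \<and> b < a \<and> L = hnf_lattice a b c"
proof -
  define c where "c = (LEAST c::nat. c > 0 \<and> (\<exists>x. (x, int c) \<in> L))"
  have "nat k2 > 0 \<and> (\<exists>x. (x, int (nat k2)) \<in> L)" using k2 by auto
  then have c: "c > 0" "\<exists>x. (x, int c) \<in> L"
    using LeastI_ex[of "\<lambda>c::nat. c > 0 \<and> (\<exists>x. (x, int c) \<in> L)"] unfolding c_def by blast+
  have cmin: "\<And>c'. c' > 0 \<Longrightarrow> (x, int c') \<in> L \<Longrightarrow> c \<le> c'" for x
    unfolding c_def by (rule Least_le) blast
  define a where "a = (LEAST a::nat. a > 0 \<and> (int a, 0) \<in> L)"
  have "nat k1 > 0 \<and> (int (nat k1), 0) \<in> L" using k1 by auto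
  then have a: "a > 0" "(int a, 0) \<in> L"
    using LeastI_ex[of "\<lambda>a::nat. a > 0 \<and> (int a, 0) \<in> L"] unfolding a_def by blast+
  have amin: "\<And>a'. a' > 0 \<Longrightarrow> (int a', 0) \<in> L \<Longrightarrow> a \<le> a'"
    unfolding a_def by (rule Least_le) blast
  obtain x0 where x0: "(x0, int c) \<in> L" using c by blast
  define b where "b = nat (x0 mod int a)"
  have ba: "b < a" unfolding b_def using a by (simp add: nat_less_iff)
  have "(1 * x0 + (- (x0 div int a)) * int a, 1 * int c + (- (x0 div int a)) * 0) \<in> L"
    by (rule sublattice_lincomb[OF L x0 a(2)])
  then have bc: "(int b, int c) \<in> L" unfolding b_def using a by (simp add: minus_div_mult_eq_mod)
  have "int c dvd y" if "(x,y) \<in> L" for x y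
  proof (rule ccontr)
    let ?q = "y div int c"
    have "(1 * x + (- ?q) * int b, 1 * y + (- ?q) * int c) \<in> L"
      by (rule sublattice_lincomb[OF L that bc])
    then have "(x - ?q * int b, y mod int c) \<in> L" by (simp add: minus_div_mult_eq_mod)
    moreover assume "\<not> int c dvd y"
    then have "0 < y mod int c" "y mod int c < int c" using c
      by (simp_all add: dvd_eq_mod_eq_0 order_neq_le_trans)
    ultimately show False using cmin[of "nat (y mod int c)" "x - ?q * int b"] by simp
  qed
  moreover have "int a dvd x" if "(x,0) \<in> L" for x
  proof (rule ccontr)
    have "(1 * x + (- (x div int a)) * int a, 1 * 0 + (- (x div int a)) * 0) \<in> L"
      by (rule sublattice_lincomb[OF L that a(2)])
    then have "(x mod int a, 0) \<in> L" by (simp add: minus_div_mult_eq_mod)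
    moreover assume "\<not> int a dvd x"
    then have "0 < x mod int a" "x mod int a < int a" using a
      by (simp_all add: dvd_eq_mod_eq_0 order_neq_le_trans)
    ultimately show False using amin[of "nat (x mod int a)"] by simp
  qed
  ultimately have "L = hnf_lattice a b c" using sublattice_eq_hnf_lattice[OF L a(2) bc c(1)]
    by blast
  then show ?thesis using a c ba by blast
qed

lemma finite_index_axis_vectors:
  assumes L: "sublattice L" and fin: "finite (range (\<lambda>x. coset x L))"
  shows "\<exists>k>0. (k, 0) \<in> L" "\<exists>k>0. (0, k) \<in> L"
proof -
  have pos_multiple: "\<exists>k>0. (k * fst v, k * snd v) \<in> L" for v
  proof -
    let ?h = "\<lambda>j::nat. coset (int j * fst v, int j * snd v) L"
    have "finite (range ?h)" by (rule finite_subset[OF _ fin]) auto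
    then have "\<not> inj ?h" using finite_imageD[of ?h UNIV] by auto
    then obtain i j where ij: "i \<noteq> j" "?h i = ?h j" unfolding inj_def by blast
    define k where "k = int i - int j"
    have kv: "(k * fst v, k * snd v) \<in> L"
      using coset_eq_iff[OF L] ij(2) by (simp add: k_def left_diff_distrib)
    have "(\<bar>k\<bar> * fst v, \<bar>k\<bar> * snd v) \<in> L"
      using kv sublattice_neg[OF L kv] by (cases "k \<ge> 0") simp_all
    then show ?thesis using ij(1) k_def by (intro exI[of _ "\<bar>k\<bar>"]) auto
  qed
  show "\<exists>k>0. (k, 0) \<in> L" using pos_multiple[of "(1, 0)"] by simp
  show "\<exists>k>0. (0, k) \<in> L" using pos_multiple[of "(0, 1)"] by simp
qed

lemma Lambda_eq_hnf_lattice: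
  assumes "d > 0" "L \<in> Lambda d"
  obtains a b c where "a > 0" "c > 0" "b < a" "L = hnf_lattice a b c" "a * c = d"
proof -
  have L: "sublattice L" and cd: "card (range (\<lambda>x. coset x L)) = d" using assms Lambda_def by auto
  have "finite (range (\<lambda>x. coset x L))" using cd assms(1) card_ge_0_finite by auto
  then obtain k1 k2 where k: "(k1, 0) \<in> L" "k1 > 0" "(0, k2) \<in> L" "k2 > 0"
    using finite_index_axis_vectors[OF L] by blast
  obtain a b c where h: "a > 0" "c > 0" "b < a" "L = hnf_lattice a b c"
    using sublattice_hnf_exists[OF L k] by blast
  moreover have "a * c = d" using card_cosets_hnf_lattice[OF h(1,2), of b] h(4) cd by simp
  ultimately show ?thesis using that by blast
qed

lemma finite_Lambda:
  assumes "d > 0"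
  shows "finite (Lambda d)"
proof -
  have "Lambda d \<subseteq> (\<lambda>(a,b,c). hnf_lattice a b c) ` ({..d} \<times> {..d} \<times> {..d})"
  proof
    fix L assume L: "L \<in> Lambda d"
    obtain a b c where h: "a > 0" "c > 0" "b < a" "L = hnf_lattice a b c" "a * c = d"
      by (rule Lambda_eq_hnf_lattice[OF assms L])
    have "a \<le> a * c" "c \<le> a * c" using h(1,2) by simp_all
    then have "a \<le> d" "c \<le> d" using h(5) by simp_all
    then have "(a,b,c) \<in> {..d} \<times> {..d} \<times> {..d}" using h by simp
    then show "L \<in> (\<lambda>(a,b,c). hnf_lattice a b c) ` ({..d} \<times> {..d} \<times> {..d})" using h by force
  qed
  then show ?thesis by (rule finite_subset) simp
qed

section \<open>Counting surfaces by their lattice of periods\<close>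

lemma sublattice_periods:
  assumes "(r,u) \<in> sts n" "inH2 n (r,u)"
  shows "sublattice (periods n (r,u))"
proof -
  obtain c0 where c0: "c0 < n" "comm r u c0 \<noteq> c0" using cone_point_exists[OF assms(2)] by blast
  have b: "bij r" "bij u" using sts_bij[OF assms(1)] by auto
  show ?thesis unfolding sublattice_def periods_eq_loops[OF assms c0]
  proof (intro conjI ballI)
    show "(0,0) \<in> {(a,b). walk r u c0 c0 a b}" by (simp add: walk_refl)
    fix x y assume "x \<in> {(a,b). walk r u c0 c0 a b}" "y \<in> {(a,b). walk r u c0 c0 a b}"
    then show "(fst x + fst y, snd x + snd y) \<in> {(a,b). walk r u c0 c0 a b}"
      using walk_trans by (cases x, cases y) fastforce
  next
    fix x assume "x \<in> {(a,b). walk r u c0 c0 a b}"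
    then show "(- fst x, - snd x) \<in> {(a,b). walk r u c0 c0 a b}"
      using walk_reverse[OF b] by (cases x) fastforce
  qed
qed

lemma periods_axis_vectors:
  assumes "(r,u) \<in> sts n" "inH2 n (r,u)"
  shows "\<exists>k>0. (k,0) \<in> periods n (r,u)" "\<exists>k>0. (0,k) \<in> periods n (r,u)"
proof -
  obtain c0 where c0: "c0 < n" "comm r u c0 \<noteq> c0" using cone_point_exists[OF assms(2)] by blast
  note P = periods_eq_loops[OF assms c0]
  obtain N where N: "r ^^ N = id" "N > 0"
    using permutation_is_nilpotent permutation_permutes sts_permutes(1)[OF assms(1)] by blast
  obtain M where M: "u ^^ M = id" "M > 0"
    using permutation_is_nilpotent permutation_permutes sts_permutes(2)[OF assms(1)] by blast
  show "\<exists>k>0. (k,0) \<in> periods n (r,u)"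
    using walk_funpow_right[of r u c0 N] N P by (intro exI[of _ "int N"]) simp
  show "\<exists>k>0. (0,k) \<in> periods n (r,u)"
    using walk_funpow_up[of r u c0 M] M P by (intro exI[of _ "int M"]) simp
qed

lemma card_period_classes_hnf_lattice:
  assumes a: "a > 0" and c: "c > 0" and cn: "c dvd n" and n: "n > 0"
  shows "card (period_classes n (hnf_lattice a b c)) =
    card (period_classes (n div c) (scale_lattice a UNIV))"
proof -
  let ?L = "hnf_lattice a b c"
  define L1 where "L1 = {(x,y). int a dvd y - int b * x}"
  have e1: "prod.swap ` ?L = scale_lattice c L1"
    unfolding L1_def scale_lattice_def hnf_lattice_def using c by auto
  have e2: "shear_lattice b (prod.swap ` L1) = scale_lattice a UNIV"
    unfolding L1_def scale_lattice_def shear_lattice_def by auto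
  have nc: "n div c > 0" using cn n by (metis dvd_div_eq_0_iff not_gr0)
  have "card (period_classes n ?L) = card (period_classes (n div c * c) (scale_lattice c L1))"
    using card_period_classes_swap[of n ?L] e1 cn by simp
  also have "\<dots> = card (period_classes (n div c) L1)" using card_period_classes_stretch[OF nc c]
    by simp
  also have "\<dots> = card (period_classes (n div c) (shear_lattice b (prod.swap ` L1)))"
    using card_period_classes_swap card_period_classes_shear by metis
  finally show ?thesis using e2 by simp
qed

lemma nonempty_with_periods_scale_lattice_dvd:
  assumes "p \<in> with_periods n (scale_lattice e UNIV)" "e > 0"
  shows "e dvd n"
proof (cases p)
  case (Pair r u)
  with assms show ?thesis
    using dvd_of_horizontally_divisible[of r u n e]
      by (auto simp: with_periods_def scale_lattice_def)
qed

lemma card_period_classes_scale_lattice: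
  assumes "a > 0" "a dvd N" "N > 0"
  shows "card (period_classes N (scale_lattice a UNIV)) = card (period_classes (N div a) UNIV)"
  using card_period_classes_stretch[of "N div a" a UNIV] assms
  by (metis dvd_div_eq_0_iff dvd_div_mult_self not_gr0)

lemma hnf_periods_dvd:
  assumes p: "p \<in> with_periods n (hnf_lattice a b c)" and a: "a > 0" and c: "c > 0"
  shows "a * c dvd n"
proof -
  obtain r u where pp: "p = (r,u)" by (cases p)
  have s: "(r,u) \<in> sts n" "inH2 n (r,u)" "periods n (r,u) = hnf_lattice a b c"
    using p pp with_periods_def by auto
  have n: "n > 0" using s(2) by (metis cone_point_exists not_less0 gr0I)
  have cn: "c dvd n"
  proof (rule dvd_of_horizontally_divisible[OF sts_swap[OF s(1), simplified] _ c])
    show "inH2 n (u,r)" using inH2_swap[OF s(1)] s(2) by simp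
    fix A B assume "(A,B) \<in> periods n (u,r)"
    then show "int c dvd A" using periods_swap[OF s(1)] s(3) unfolding hnf_lattice_def by auto
  qed
  have "period_classes n (hnf_lattice a b c) \<noteq> {}"
    using p unfolding period_classes_def quotient_is_empty by blast
  then have "card (period_classes (n div c) (scale_lattice a UNIV)) > 0"
    using finite_period_classes card_period_classes_hnf_lattice[OF a c cn n]
      by (metis card_gt_0_iff)
  then have "period_classes (n div c) (scale_lattice a UNIV) \<noteq> {}" by auto
  then obtain q where "q \<in> with_periods (n div c) (scale_lattice a UNIV)"
    unfolding period_classes_def quotient_is_empty by blast
  then have "a dvd n div c" using nonempty_with_periods_scale_lattice_dvd a by blast
  then show ?thesis using cn by (metis dvd_div_iff_mult mult.commute c gr_implies_not0)
qed

lemma periods_in_Lambda: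
  assumes "p \<in> sts n" "inH2 n p"
  shows "\<exists>d. d dvd n \<and> periods n p \<in> Lambda d"
proof (cases p)
  case (Pair r u)
  with assms obtain k1 k2 where "(k1,0) \<in> periods n p" "k1 > 0" "(0,k2) \<in> periods n p" "k2 > 0"
    using periods_axis_vectors by blast
  then obtain a b c where h: "a > 0" "c > 0" "periods n p = hnf_lattice a b c"
    using sublattice_hnf_exists sublattice_periods assms Pair by metis
  then have "a * c dvd n" using hnf_periods_dvd[of p n a b c] assms by (simp add: with_periods_def)
  then show ?thesis using hnf_lattice_in_Lambda[OF h(1,2)] h(3) by metis
qed

lemma card_period_classes_Lambda:
  assumes n: "n > 0" and d: "d dvd n" and L: "L \<in> Lambda d"
  shows "card (period_classes n L) = card (Ep (n div d))"
proof -
  have "d > 0" using d n by (cases d) auto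
  then obtain a b c where h: "a > 0" "c > 0" "L = hnf_lattice a b c" "a * c = d"
    using Lambda_eq_hnf_lattice[OF _ L] by metis
  have cn: "c dvd n" "a dvd n div c" using d h(4)
    by (auto intro: dvd_mult_right simp: dvd_div_iff_mult mult.commute)
  have "n div c > 0" using cn n by (metis dvd_div_eq_0_iff not_gr0)
  have "card (period_classes n L) = card (period_classes (n div c) (scale_lattice a UNIV))"
    using card_period_classes_hnf_lattice[OF h(1,2) cn(1) n] h(3) by simp
  also have "\<dots> = card (period_classes (n div c div a) UNIV)"
    by (rule card_period_classes_scale_lattice[OF h(1) cn(2) \<open>n div c > 0\<close>])
  also have "n div c div a = n div d" using h(4) div_mult2_eq[of n c a] by (simp add: mult.commute)
  finally show ?thesis by (simp add: Ep_eq_period_classes)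
qed

lemma finite_E: "finite (E n)"
  unfolding E_def quotient_def using sts_finite by (auto intro: finite_subset)

lemma E_eq_UN_period_classes:
  "E n = (\<Union>L \<in> (\<Union>d \<in> {d. d dvd n}. Lambda d). period_classes n L)"
proof (intro subset_antisym subsetI)
  fix C assume "C \<in> E n"
  then obtain p where p: "p \<in> sts n" "inH2 n p" "C = sts_iso n `` {p}"
    unfolding E_def by (auto elim: quotientE)
  then have "C \<in> period_classes n (periods n p)"
    unfolding period_classes_def with_periods_def by (auto intro: quotientI)
  then show "C \<in> (\<Union>L \<in> (\<Union>d \<in> {d. d dvd n}. Lambda d). period_classes n L)"
    using periods_in_Lambda[OF p(1,2)] by blast
next
  fix C assume "C \<in> (\<Union>L \<in> (\<Union>d \<in> {d. d dvd n}. Lambda d). period_classes n L)"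
  then obtain L p where "p \<in> with_periods n L" "C = sts_iso n `` {p}"
    unfolding period_classes_def by (auto elim: quotientE)
  then show "C \<in> E n" unfolding E_def with_periods_def by (auto intro: quotientI)
qed

lemma period_classes_disjoint:
  assumes "L1 \<noteq> L2"
  shows "period_classes n L1 \<inter> period_classes n L2 = {}"
proof (rule ccontr)
  assume "period_classes n L1 \<inter> period_classes n L2 \<noteq> {}"
  then obtain p1 p2 where p: "p1 \<in> with_periods n L1" "p2 \<in> with_periods n L2"
      "sts_iso n `` {p1} = sts_iso n `` {p2}"
    unfolding period_classes_def by (auto elim!: quotientE)
  then have "(p1,p2) \<in> sts_iso n"
    using equiv_class_eq_iff[OF equiv_sts_iso] by (auto simp: with_periods_def)
  then show False using sts_iso_periods p(1,2) assms by (auto simp: with_periods_def)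
qed

lemma card_E:
  assumes "n > 0"
  shows "card (E n) = card (SIGMA d:{d. d dvd n}. Ep (n div d) \<times> Lambda d)"
proof -
  let ?D = "{d. d dvd n}"
  have fin_D: "finite ?D" using assms by simp
  have fin_Lambda: "finite (Lambda d)" if "d \<in> ?D" for d
    using that assms finite_Lambda by (metis dvd_0_left_iff gr0I mem_Collect_eq not_less0)
  have "card (E n) = (\<Sum>L \<in> (\<Union>d \<in> ?D. Lambda d). card (period_classes n L))"
    unfolding E_eq_UN_period_classes
    by (rule card_UN_disjoint) (auto simp: fin_D fin_Lambda finite_period_classes period_classes_disjoint)
  also have "\<dots> = (\<Sum>d \<in> ?D. \<Sum>L \<in> Lambda d. card (period_classes n L))"
  proof (rule sum.UNION_disjoint[OF fin_D])
    show "\<forall>d\<in>?D. finite (Lambda d)" using fin_Lambda by blast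
    show "\<forall>d1\<in>?D. \<forall>d2\<in>?D. d1 \<noteq> d2 \<longrightarrow> Lambda d1 \<inter> Lambda d2 = {}"
      unfolding Lambda_def by auto
  qed
  also have "\<dots> = (\<Sum>d \<in> ?D. card (Ep (n div d) \<times> Lambda d))"
    using card_period_classes_Lambda[OF assms] by (simp add: card_cartesian_product mult.commute)
  also have "\<dots> = card (SIGMA d:?D. Ep (n div d) \<times> Lambda d)"
    using fin_D fin_Lambda
      by (subst card_SigmaI) (auto simp: Ep_eq_period_classes finite_period_classes)
  finally show ?thesis .
qed

theorem mainTheorem9:
  fixes n :: nat
  assumes "n > 0"
  shows "\<exists>f. bij_betw f (E n) (SIGMA d:{d. d dvd n}. Ep (n div d) \<times> Lambda d)"
proof (rule finite_same_card_bij[OF finite_E _ card_E[OF assms]])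
  show "finite (SIGMA d:{d. d dvd n}. Ep (n div d) \<times> Lambda d)"
    using assms finite_Lambda
    by (intro finite_SigmaI) (auto simp: Ep_eq_period_classes finite_period_classes intro: dvd_pos_nat)
qed

end
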